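(* For Dyck paths $\lambda_1,\lambda_2$ and integers $a,b\ge0$, \[ B_q(\lambda_1*\lambda_2; a,b) = \sum_{i\ge0} B_q(\lambda_1; a,i)\, B_q(\lambda_2; i,b). \]
   Context: A Dyck path of length $2n$ is a lattice path from $(0,0)$ to $(n,n)$ with up steps $(0,1)$ and down steps $(1,0)$ never going below $y=x$; $\mathrm{Dyck}(2n)$ is their set. For lattice paths $\nu,\rho$, $\nu*\rho$ is obtained by translating $\rho$ to start at the endpoint of $\nu$ and concatenating. For $\lambda\in\mathrm{Dyck}(2n)$ and integers $a,b\ge0$, let $O=(0,0)$, $N=(n,n)$, $A=O+(-a,a)$, $B=N+(-b,b)$, and $L(\lambda;a,b)$ the set of lattice paths with steps $(0,1),(1,0)$ from $A$ to $B$ never going below $\lambda$. For $\mu\in L(\lambda;a,b)$, $\lambda/\mu$ is the region bounded by $\lambda$, $\mu$ and segments $OA$, $NB$; $|\lambda/\mu|$ is its area. A Dyck tile is an edge-connected set of unit cells with no $2\times2$ block whose cell centers, joined by unit up/right moves, form a translated Dyck path; its length is the length of that path. A truncated Dyck tile is obtained from a Dyck tile of positive length by cutting its northeast and southwest cells along their diagonals of slope $-1$ and removing the northeast half of the northeast cell and the southwest half of the southwest cell; its half-length is half the length of the original Dyck tile. A truncated Dyck tiling of $\lambda/\mu$ is a set $T$ of truncated Dyck tiles with disjoint interiors contained in $\lambda/\mu$ such that (i) for each $\eta\in T$, if $(\eta+(1,-1))\cap\lambda/\mu$ has nonempty interior then another tile of $T$ contains $\eta+(1,-1)$, and (ii)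 no two tiles share a border segment of slope $-1$. $\mathcal{TD}(\lambda/\mu)$ is their set; $\|T\|$ is the sum of half-lengths of its tiles. $B_q(\lambda;a,b)=\sum_{\mu\in L(\lambda;a,b)}\sum_{T\in\mathcal{TD}(\lambda/\mu)} q^{|\lambda/\mu|-\|T\|}$. *)

theory Defs
  imports Main "HOL-Library.Groups_Big_Fun"
begin

(* A lattice path is a list of steps: True = up step (0,1), False = down step (1,0).
   We work in the rotated coordinates u = x + y, v = y - x.  Every step increases u by 1
   and changes v by +1 (up) or -1 (down).  *)

definition vh :: "int \<Rightarrow> bool list \<Rightarrow> nat \<Rightarrow> int" where
  "vh v0 ws j = v0 + sum_list (map (\<lambda>s. if s then 1 else -1) (take j ws))"

(* Dyck path (of length 2n for n = length/2): never goes below y = x, ends on y = x *)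
definition dyck :: "bool list \<Rightarrow> bool" where
  "dyck ws \<longleftrightarrow> (\<forall>j \<le> length ws. 0 \<le> vh 0 ws j) \<and> vh 0 ws (length ws) = 0"

(* L(lam;a,b): paths from A=(-a,a) (u=0, v=2a) to B=(n-b,n+b) (u=2n, v=2b),
   2n = length lam, never going below lam (pointwise in v over the common u-range). *)
definition Lpaths :: "bool list \<Rightarrow> nat \<Rightarrow> nat \<Rightarrow> bool list set" where
  "Lpaths lam a b = {mu. length mu = length lam \<and> vh (2 * int a) mu (length mu) = 2 * int b
      \<and> (\<forall>j \<le> length lam. vh 0 lam j \<le> vh (2 * int a) mu j)}"

(* Each unit cell, cut along its slope -1 diagonal, gives two triangles.
   In rotated coordinates the strip k \<le> u \<le> k+1 is cut into triangles indexed by their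
   middle height v; (k,v) denotes the triangle of that strip occupying v-1 < . < v+1
   at the vertical side.  The cell with lower-left corner (x,y) has centre
   (u,v) = (x+y+1, y-x) and consists of the SW half (x+y, y-x) and the NE half (x+y+1, y-x). *)

(* The region lam/mu as a set of half-cells (its area is card/2). *)
definition region :: "bool list \<Rightarrow> bool list \<Rightarrow> nat \<Rightarrow> (int \<times> int) set" where
  "region lam mu a = {(k, v). 0 \<le> k \<and> k < int (length lam)
      \<and> min (vh 0 lam (nat k)) (vh 0 lam (nat k + 1)) < v
      \<and> v < max (vh (2 * int a) mu (nat k)) (vh (2 * int a) mu (nat k + 1))}"

(* Truncated Dyck tile from the Dyck tile whose SW cell has lower-left corner (x,y)
   and whose cell centres follow the Dyck word ws (nonempty): all cells of the tile,
   minus the SW half of the SW cell and the NE half of the NE cell. *)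
definition trunc_tile :: "int \<Rightarrow> int \<Rightarrow> bool list \<Rightarrow> (int \<times> int) set" where
  "trunc_tile x y ws =
     {(x + y + 1 + int j, vh (y - x) ws j) | j. j < length ws}
   \<union> {(x + y + 1 + int j, vh (y - x) ws (Suc j)) | j. j < length ws}"

definition is_trunc_tile :: "(int \<times> int) set \<Rightarrow> bool" where
  "is_trunc_tile S \<longleftrightarrow> (\<exists>x y ws. dyck ws \<and> ws \<noteq> [] \<and> S = trunc_tile x y ws)"

definition halflen :: "(int \<times> int) set \<Rightarrow> nat" where
  "halflen S = (THE k. \<exists>x y ws. dyck ws \<and> ws \<noteq> [] \<and> length ws = 2 * k \<and> S = trunc_tile x y ws)"

(* translation by (1,-1): u unchanged, v decreased by 2 *)
definition shift :: "(int \<times> int) set \<Rightarrow> (int \<times> int) set" where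
  "shift S = (\<lambda>(k, v). (k, v - 2)) ` S"

(* The slope -1 unit segment at u (from v-1 to v+1), u+v odd, separates half-cells
   (u-1,v) and (u,v); it is a border segment of S iff exactly one of them lies in S. *)
definition border :: "(int \<times> int) set \<Rightarrow> int \<Rightarrow> int \<Rightarrow> bool" where
  "border S u v \<longleftrightarrow> odd (u + v) \<and> (((u - 1, v) \<in> S) \<noteq> ((u, v) \<in> S))"

definition TD :: "bool list \<Rightarrow> bool list \<Rightarrow> nat \<Rightarrow> (int \<times> int) set set set" where
  "TD lam mu a = {T. (\<forall>\<eta>\<in>T. is_trunc_tile \<eta> \<and> \<eta> \<subseteq> region lam mu a)
     \<and> (\<forall>\<eta>1\<in>T. \<forall>\<eta>2\<in>T. \<eta>1 \<noteq> \<eta>2 \<longrightarrow> \<eta>1 \<inter> \<eta>2 = {})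
     \<and> (\<forall>\<eta>\<in>T. shift \<eta> \<inter> region lam mu a \<noteq> {} \<longrightarrow> (\<exists>\<eta>'\<in>T. \<eta>' \<noteq> \<eta> \<and> shift \<eta> \<subseteq> \<eta>'))
     \<and> (\<forall>\<eta>1\<in>T. \<forall>\<eta>2\<in>T. \<eta>1 \<noteq> \<eta>2 \<longrightarrow> \<not> (\<exists>u v. border \<eta>1 u v \<and> border \<eta>2 u v))}"

(* B_q(lam;a,b) written in the variable t = q^(1/2):
   q^(|lam/mu| - ||T||) = t^(#half-cells - 2 ||T||). *)
definition Bq :: "'a::comm_semiring_1 \<Rightarrow> bool list \<Rightarrow> nat \<Rightarrow> nat \<Rightarrow> 'a" where
  "Bq t lam a b = (\<Sum>mu\<in>Lpaths lam a b. \<Sum>T\<in>TD lam mu a.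
      t ^ (card (region lam mu a) - 2 * (\<Sum>\<eta>\<in>T. halflen \<eta>)))"

end

theory Submission
  imports Defs
begin

(* The heart is the cutting argument (locale column_cut):
   in a region that is positive and downward closed next to an even column L, a tile
   crossing L does so at its base height (tile_crosses_at_base).  Hence cutting every tile
   at L is a bijection, with inverse glue, from the tilings of the region onto pairs of
   tilings of its two sides, additive in the statistic, and the tiling polynomial factors
   (tiling_poly_cut).  Tiling polynomials are invariant under even horizontal translations.
   For L = length l1 the left side of the region of l1 @ l2 above m1 @ m2 is the region of
   l1 above m1 and the right side a translate of the region of l2 above m2; and every path
   of L(l1 @ l2; a, b) splits uniquely as m1 @ m2 with m1 in L(l1; a, i), m2 in L(l2; i, b).
   Summing the factorisation over this splitting gives the theorem. *)

section \<open>Heights of lattice paths\<close>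

lemma vh_0 [simp]: "vh v0 ws 0 = v0"
  by (simp add: vh_def)

lemma vh_Suc: "j < length ws \<Longrightarrow> vh v0 ws (Suc j) = vh v0 ws j + (if ws ! j then 1 else -1)"
  by (simp add: vh_def take_Suc_conv_app_nth)

lemma vh_ge: "length ws \<le> j \<Longrightarrow> vh v0 ws j = vh v0 ws (length ws)"
  by (simp add: vh_def)

lemma vh_base: "vh v0 ws j = v0 + vh 0 ws j"
  by (simp add: vh_def)

lemma vh_append:
  "vh v0 (xs @ ys) j = (if j \<le> length xs then vh v0 xs j else vh (vh v0 xs (length xs)) ys (j - length xs))"
  by (simp add: vh_def)

lemma vh_append_le: "j \<le> length xs \<Longrightarrow> vh v0 (xs @ ys) j = vh v0 xs j"
  by (simp add: vh_def)

lemma vh_append_ge: "vh v0 (xs @ ys) (length xs + j) = vh (vh v0 xs (length xs)) ys j"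
  by (simp add: vh_def)

lemma vh_take: "j \<le> m \<Longrightarrow> vh v0 (take m ws) j = vh v0 ws j"
  by (simp add: vh_def min_def)

lemma vh_drop: "m \<le> length ws \<Longrightarrow> vh (vh v0 ws m) (drop m ws) j = vh v0 ws (m + j)"
  using vh_append_ge[of v0 "take m ws" "drop m ws" j]
  by (cases "m = length ws") (auto simp: vh_take min_def)

text \<open>Each step changes the height by one, so height and position have matching parity,
  and the height can grow at most linearly.\<close>

lemma vh_parity: "j \<le> length ws \<Longrightarrow> even (vh v0 ws j - v0 - int j)"
proof (induction j)
  case (Suc j)
  then show ?case by (auto simp: vh_Suc)
qed simp

lemma vh_le: "vh v0 ws j \<le> v0 + int j"
proof (induction j)
  case (Suc j)
  then show ?case by (cases "j < length ws") (auto simp: vh_Suc vh_ge[of ws j] vh_ge[of ws "Suc j"])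
qed simp

lemma dyck_nonneg: "dyck ws \<Longrightarrow> 0 \<le> vh 0 ws j"
  unfolding dyck_def by (metis nle_le vh_ge)

lemma dyck_end: "dyck ws \<Longrightarrow> vh 0 ws (length ws) = 0"
  by (simp add: dyck_def)

lemma dyck_even: "dyck ws \<Longrightarrow> even (length ws)"
  using vh_parity[of "length ws" ws 0] dyck_end[of ws] by simp

lemma dyck_append: "dyck xs \<Longrightarrow> dyck ys \<Longrightarrow> dyck (xs @ ys)"
  unfolding dyck_def by (auto simp: vh_append)

lemma dyck_take: "dyck ws \<Longrightarrow> vh 0 ws m = 0 \<Longrightarrow> dyck (take m ws)"
  unfolding dyck_def by (auto simp: vh_take min_def)

lemma dyck_drop: "dyck ws \<Longrightarrow> m \<le> length ws \<Longrightarrow> vh 0 ws m = 0 \<Longrightarrow> dyck (drop m ws)"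
  using vh_drop[of m ws 0] unfolding dyck_def by (auto simp: dyck_nonneg dyck_end)


section \<open>Truncated Dyck tiles in rotated coordinates\<close>

text \<open>The truncated tile with left column k0 and base height v0 traced by the Dyck word ws:
  in each of its columns k0 + j it occupies the two half-cells at the heights of ws before
  and after step j.  For a genuine tile k0 + v0 is odd; the first kind of half-cell then has
  odd and the second kind even coordinate sum.\<close>

definition tile :: "int \<Rightarrow> int \<Rightarrow> bool list \<Rightarrow> (int \<times> int) set" where
  "tile k0 v0 ws = {(k0 + int j, vh v0 ws j) | j. j < length ws}
                  \<union> {(k0 + int j, vh v0 ws (Suc j)) | j. j < length ws}"

lemma trunc_tile_eq_tile: "trunc_tile x y ws = tile (x + y + 1) (y - x) ws"
  unfolding trunc_tile_def tile_def by (simp add: add.assoc)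

lemma mem_tile: "(k, v) \<in> tile k0 v0 ws \<longleftrightarrow> k0 \<le> k \<and> k < k0 + int (length ws) \<and>
   (v = vh v0 ws (nat (k - k0)) \<or> v = vh v0 ws (Suc (nat (k - k0))))"
proof
  assume "k0 \<le> k \<and> k < k0 + int (length ws) \<and>
    (v = vh v0 ws (nat (k - k0)) \<or> v = vh v0 ws (Suc (nat (k - k0))))"
  moreover have "k = k0 + int (nat (k - k0))" if "k0 \<le> k" using that by simp
  ultimately show "(k, v) \<in> tile k0 v0 ws"
    unfolding tile_def by (smt (verit, best) Un_iff mem_Collect_eq nat_less_iff)
qed (auto simp: tile_def)

lemma tile_image: "tile k0 v0 ws = (\<lambda>j. (k0 + int j, vh v0 ws j)) ` {..<length ws}
                                  \<union> (\<lambda>j. (k0 + int j, vh v0 ws (Suc j))) ` {..<length ws}"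
  unfolding tile_def by (simp only: setcompr_eq_image lessThan_def)

text \<open>By parity, a tile contains exactly one half-cell of each kind in each of its columns.\<close>

lemma tile_odd_cell:
  assumes "odd (k0 + v0)" "odd (k + v)"
  shows "(k, v) \<in> tile k0 v0 ws \<longleftrightarrow> k0 \<le> k \<and> k < k0 + int (length ws) \<and> v = vh v0 ws (nat (k - k0))"
proof -
  have "v \<noteq> vh v0 ws (Suc m)" if "k = k0 + int m" "m < length ws" for m
  proof
    assume "v = vh v0 ws (Suc m)"
    moreover have "even (vh v0 ws (Suc m) - v0 - int (Suc m))" using that by (intro vh_parity) simp
    ultimately show False using assms that by simp presburger
  qed
  then show ?thesis unfolding mem_tile by (smt (verit) int_nat_eq nat_less_iff)
qed

lemma tile_even_cell:
  assumes "odd (k0 + v0)" "even (k + v)"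
  shows "(k, v) \<in> tile k0 v0 ws \<longleftrightarrow> k0 \<le> k \<and> k < k0 + int (length ws) \<and> v = vh v0 ws (Suc (nat (k - k0)))"
proof -
  have "v \<noteq> vh v0 ws m" if "k = k0 + int m" "m < length ws" for m
  proof
    assume "v = vh v0 ws m"
    moreover have "even (vh v0 ws m - v0 - int m)" using that by (intro vh_parity) simp
    ultimately show False using assms that by simp presburger
  qed
  then show ?thesis unfolding mem_tile by (smt (verit) int_nat_eq nat_less_iff)
qed

lemma tile_append:
  "tile k0 v0 (xs @ ys) = tile k0 v0 xs \<union> tile (k0 + int (length xs)) (vh v0 xs (length xs)) ys"
proof (rule set_eqI, clarify)
  fix k v
  show "(k, v) \<in> tile k0 v0 (xs @ ys) \<longleftrightarrow>
        (k, v) \<in> tile k0 v0 xs \<union> tile (k0 + int (length xs)) (vh v0 xs (length xs)) ys"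
  proof (cases "k < k0 + int (length xs)")
    case True
    then show ?thesis unfolding Un_iff mem_tile by (auto simp: vh_append)
  next
    case False
    define n where "n = nat (k - (k0 + int (length xs)))"
    have e: "nat (k - k0) = length xs + n" "Suc (nat (k - k0)) = length xs + Suc n"
      using False unfolding n_def by auto
    have "vh v0 (xs @ ys) (Suc (length xs + n)) = vh (vh v0 xs (length xs)) ys (Suc n)"
      using vh_append_ge[of v0 xs ys "Suc n"] by simp
    then show ?thesis
      using False unfolding Un_iff mem_tile e vh_append_ge n_def by auto
  qed
qed

lemma card_tile: "card (tile k0 v0 ws) = 2 * length ws"
proof -
  let ?A = "(\<lambda>j. (k0 + int j, vh v0 ws j)) ` {..<length ws}"
  let ?B = "(\<lambda>j. (k0 + int j, vh v0 ws (Suc j))) ` {..<length ws}"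
  have "?A \<inter> ?B = {}"
    by (auto simp: vh_Suc split: if_splits)
  moreover have "card ?A = length ws" "card ?B = length ws"
    by (subst card_image; auto simp: inj_on_def)+
  ultimately show ?thesis unfolding tile_image by (subst card_Un_disjoint) auto
qed

lemma tile_empty_iff: "tile k0 v0 ws = {} \<longleftrightarrow> ws = []"
  unfolding tile_image by auto

lemma tile_above_base: "dyck ws \<Longrightarrow> (k, v) \<in> tile k0 v0 ws \<Longrightarrow> v0 \<le> v"
  unfolding mem_tile using dyck_nonneg[of ws] by (auto simp: vh_base[of v0])

lemma is_trunc_tile_iff:
  "is_trunc_tile S \<longleftrightarrow> (\<exists>k0 v0 ws. odd (k0 + v0) \<and> dyck ws \<and> ws \<noteq> [] \<and> S = tile k0 v0 ws)"
proof
  assume "is_trunc_tile S"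
  then obtain x y ws where "dyck ws" "ws \<noteq> []" "S = tile (x + y + 1) (y - x) ws"
    unfolding is_trunc_tile_def trunc_tile_eq_tile by blast
  moreover have "odd ((x + y + 1) + (y - x))" by presburger
  ultimately show "\<exists>k0 v0 ws. odd (k0 + v0) \<and> dyck ws \<and> ws \<noteq> [] \<and> S = tile k0 v0 ws" by blast
next
  assume "\<exists>k0 v0 ws. odd (k0 + v0) \<and> dyck ws \<and> ws \<noteq> [] \<and> S = tile k0 v0 ws"
  then obtain k0 v0 ws where h: "odd (k0 + v0)" "dyck ws" "ws \<noteq> []" "S = tile k0 v0 ws" by blast
  define x where "x = (k0 - v0 - 1) div 2"
  define y where "y = (k0 + v0 - 1) div 2"
  have "x + y + 1 = k0" "y - x = v0" unfolding x_def y_def using h(1) by presburger+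
  then show "is_trunc_tile S" unfolding is_trunc_tile_def trunc_tile_eq_tile using h by metis
qed

lemma trunc_tile_nonempty: "is_trunc_tile S \<Longrightarrow> S \<noteq> {}"
  unfolding is_trunc_tile_iff by (auto simp: tile_empty_iff)

lemma halflen_card: "is_trunc_tile S \<Longrightarrow> 4 * halflen S = card S"
proof -
  assume "is_trunc_tile S"
  then obtain x y ws where h: "dyck ws" "ws \<noteq> []" "S = trunc_tile x y ws"
    unfolding is_trunc_tile_def by blast
  have c: "card S = 2 * length ws" using h(3) by (simp add: trunc_tile_eq_tile card_tile)
  obtain k where k: "length ws = 2 * k" using dyck_even[OF h(1)] by blast
  have "halflen S = k"
    unfolding halflen_def
  proof (rule the_equality)
    show "\<exists>x y ws. dyck ws \<and> ws \<noteq> [] \<and> length ws = 2 * k \<and> S = trunc_tile x y ws"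
      using h k by blast
  next
    fix k' assume "\<exists>x y ws. dyck ws \<and> ws \<noteq> [] \<and> length ws = 2 * k' \<and> S = trunc_tile x y ws"
    then have "card S = 4 * k'" by (auto simp: trunc_tile_eq_tile card_tile)
    then show "k' = k" using c k by simp
  qed
  then show ?thesis using c k by simp
qed

lemma tile_unique_even_cell:
  "is_trunc_tile A \<Longrightarrow> (k, v) \<in> A \<Longrightarrow> (k, v') \<in> A \<Longrightarrow> even (k + v) \<Longrightarrow> even (k + v') \<Longrightarrow> v = v'"
  unfolding is_trunc_tile_iff using tile_even_cell by metis

lemma tile_unique_odd_cell:
  "is_trunc_tile A \<Longrightarrow> (k, v) \<in> A \<Longrightarrow> (k, v') \<in> A \<Longrightarrow> odd (k + v) \<Longrightarrow> odd (k + v') \<Longrightarrow> v = v'"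
  unfolding is_trunc_tile_iff using tile_odd_cell by metis

section \<open>Truncated Dyck tilings of an arbitrary region\<close>

lemma mem_shift: "(k, v) \<in> shift S \<longleftrightarrow> (k, v + 2) \<in> S"
  by (force simp: shift_def image_iff)

lemma shift_Un: "shift (A \<union> B) = shift A \<union> shift B"
  by (simp add: shift_def image_Un)

lemma shift_empty [simp]: "shift {} = {}"
  by (simp add: shift_def)

definition tilings :: "(int \<times> int) set \<Rightarrow> (int \<times> int) set set set" where
  "tilings R = {T. (\<forall>\<eta>\<in>T. is_trunc_tile \<eta> \<and> \<eta> \<subseteq> R)
     \<and> (\<forall>\<eta>1\<in>T. \<forall>\<eta>2\<in>T. \<eta>1 \<noteq> \<eta>2 \<longrightarrow> \<eta>1 \<inter> \<eta>2 = {})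
     \<and> (\<forall>\<eta>\<in>T. shift \<eta> \<inter> R \<noteq> {} \<longrightarrow> (\<exists>\<eta>'\<in>T. \<eta>' \<noteq> \<eta> \<and> shift \<eta> \<subseteq> \<eta>'))
     \<and> (\<forall>\<eta>1\<in>T. \<forall>\<eta>2\<in>T. \<eta>1 \<noteq> \<eta>2 \<longrightarrow> \<not> (\<exists>u v. border \<eta>1 u v \<and> border \<eta>2 u v))}"

lemma TD_eq_tilings: "TD lam mu a = tilings (region lam mu a)"
  unfolding TD_def tilings_def ..

lemma tilingsI:
  assumes "\<And>\<eta>. \<eta> \<in> T \<Longrightarrow> is_trunc_tile \<eta> \<and> \<eta> \<subseteq> R"
    and "\<And>\<eta>1 \<eta>2. \<eta>1 \<in> T \<Longrightarrow> \<eta>2 \<in> T \<Longrightarrow> \<eta>1 \<noteq> \<eta>2 \<Longrightarrow> \<eta>1 \<inter> \<eta>2 = {}"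
    and "\<And>\<eta>. \<eta> \<in> T \<Longrightarrow> shift \<eta> \<inter> R \<noteq> {} \<Longrightarrow> \<exists>\<eta>'\<in>T. \<eta>' \<noteq> \<eta> \<and> shift \<eta> \<subseteq> \<eta>'"
    and "\<And>\<eta>1 \<eta>2 u v. \<eta>1 \<in> T \<Longrightarrow> \<eta>2 \<in> T \<Longrightarrow> border \<eta>1 u v \<Longrightarrow> border \<eta>2 u v \<Longrightarrow> \<eta>1 = \<eta>2"
  shows "T \<in> tilings R"
  unfolding tilings_def
proof (intro CollectI conjI ballI impI)
  show "\<not> (\<exists>u v. border \<eta>1 u v \<and> border \<eta>2 u v)" if "\<eta>1 \<in> T" "\<eta>2 \<in> T" "\<eta>1 \<noteq> \<eta>2" for \<eta>1 \<eta>2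
    using assms(4) that by blast
qed (use assms in auto)

context
  fixes T R assumes T: "T \<in> tilings R"
begin

lemma tilingsD:
  "(\<forall>\<eta>\<in>T. is_trunc_tile \<eta> \<and> \<eta> \<subseteq> R)
     \<and> (\<forall>\<eta>1\<in>T. \<forall>\<eta>2\<in>T. \<eta>1 \<noteq> \<eta>2 \<longrightarrow> \<eta>1 \<inter> \<eta>2 = {})
     \<and> (\<forall>\<eta>\<in>T. shift \<eta> \<inter> R \<noteq> {} \<longrightarrow> (\<exists>\<eta>'\<in>T. \<eta>' \<noteq> \<eta> \<and> shift \<eta> \<subseteq> \<eta>'))
     \<and> (\<forall>\<eta>1\<in>T. \<forall>\<eta>2\<in>T. \<eta>1 \<noteq> \<eta>2 \<longrightarrow> \<not> (\<exists>u v. border \<eta>1 u v \<and> border \<eta>2 u v))"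
  using T unfolding tilings_def by (rule CollectD)

lemma tilings_tile: "\<eta> \<in> T \<Longrightarrow> is_trunc_tile \<eta>"
  using tilingsD by metis

lemma tilings_subset: "\<eta> \<in> T \<Longrightarrow> \<eta> \<subseteq> R"
  using tilingsD by metis

lemma tilings_disjoint: "\<eta>1 \<in> T \<Longrightarrow> \<eta>2 \<in> T \<Longrightarrow> \<eta>1 \<noteq> \<eta>2 \<Longrightarrow> \<eta>1 \<inter> \<eta>2 = {}"
  using tilingsD by metis

lemma tilings_shift: "\<eta> \<in> T \<Longrightarrow> shift \<eta> \<inter> R \<noteq> {} \<Longrightarrow> \<exists>\<eta>'\<in>T. \<eta>' \<noteq> \<eta> \<and> shift \<eta> \<subseteq> \<eta>'"
  using tilingsD by metis

lemma tilings_border: "\<eta>1 \<in> T \<Longrightarrow> \<eta>2 \<in> T \<Longrightarrow> border \<eta>1 u v \<Longrightarrow> border \<eta>2 u v \<Longrightarrow> \<eta>1 = \<eta>2"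
  using tilingsD by metis

lemma tilings_tile_params:
  assumes "\<eta> \<in> T"
  obtains k0 v0 ws where "odd (k0 + v0)" "dyck ws" "ws \<noteq> []" "\<eta> = tile k0 v0 ws"
  using tilings_tile[OF assms] unfolding is_trunc_tile_iff by blast

text \<open>Two tiles meeting across a slope -1 segment (the half-cell left of it in one tile,
  the one right of it in the other) are equal, since otherwise both would have that
  segment on their border.\<close>

lemma tilings_adjacent:
  assumes "\<eta> \<in> T" "\<eta>' \<in> T" "odd (u + v)" "(u - 1, v) \<in> \<eta>" "(u, v) \<in> \<eta>'"
  shows "\<eta> = \<eta>'"
proof (rule ccontr)
  assume ne: "\<eta> \<noteq> \<eta>'"
  then have "\<eta> \<inter> \<eta>' = {}" using tilings_disjoint assms(1,2) by blast
  then have "border \<eta> u v" "border \<eta>' u v" using assms unfolding border_def by auto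
  then show False using tilings_border[OF assms(1,2)] ne by blast
qed

text \<open>In a finite region the tiles are disjoint, so the total half-length of a tiling is a
  quarter of the number of half-cells it covers.\<close>

lemma tilings_halflen_sum:
  assumes "finite R"
  shows "4 * (\<Sum>\<eta>\<in>T. halflen \<eta>) = card (\<Union>T)"
proof -
  have "finite T" using finite_subset[of T "Pow R"] tilings_subset assms by blast
  have "4 * (\<Sum>\<eta>\<in>T. halflen \<eta>) = (\<Sum>\<eta>\<in>T. card \<eta>)"
    by (simp add: sum_distrib_left halflen_card tilings_tile)
  also have "\<dots> = card (\<Union>T)"
  proof (rule card_Union_disjoint[symmetric])
    show "pairwise disjnt T" unfolding pairwise_def disjnt_def using tilings_disjoint by blast
    show "\<And>A. A \<in> T \<Longrightarrow> finite A" using tilings_subset assms finite_subset by blast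
  qed
  finally show ?thesis .
qed

end

definition tiling_poly :: "'a::comm_semiring_1 \<Rightarrow> (int \<times> int) set \<Rightarrow> 'a" where
  "tiling_poly t R = (\<Sum>T\<in>tilings R. t ^ (card R - 2 * (\<Sum>\<eta>\<in>T. halflen \<eta>)))"

lemma Bq_tiling_poly: "Bq t lam a b = (\<Sum>mu\<in>Lpaths lam a b. tiling_poly t (region lam mu a))"
  unfolding Bq_def tiling_poly_def TD_eq_tilings ..

section \<open>Restricting tilings to a set of columns\<close>

definition restrict_cols :: "int set \<Rightarrow> (int \<times> int) set \<Rightarrow> (int \<times> int) set" where
  "restrict_cols C S = S \<inter> C \<times> UNIV"

lemma mem_restrict_cols [simp]: "(k, v) \<in> restrict_cols C S \<longleftrightarrow> (k, v) \<in> S \<and> k \<in> C"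
  by (auto simp: restrict_cols_def)

lemma restrict_cols_subset: "restrict_cols C S \<subseteq> S"
  by (auto simp: restrict_cols_def)

lemma restrict_cols_mono: "S \<subseteq> S' \<Longrightarrow> restrict_cols C S \<subseteq> restrict_cols C S'"
  by (auto simp: restrict_cols_def)

lemma restrict_cols_Un: "restrict_cols C (A \<union> B) = restrict_cols C A \<union> restrict_cols C B"
  by (auto simp: restrict_cols_def)

lemma shift_restrict_cols: "shift (restrict_cols C S) = restrict_cols C (shift S)"
  by (auto simp: restrict_cols_def shift_def)

lemma Union_restrict_cols: "\<Union>(restrict_cols C ` T - {{}}) = restrict_cols C (\<Union>T)"
  by (auto simp: restrict_cols_def)

lemma border_nonempty: "border S u v \<Longrightarrow> S \<noteq> {}"
  by (auto simp: border_def)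

lemma border_restrict_cols: "u - 1 \<in> C \<Longrightarrow> u \<in> C \<Longrightarrow> border (restrict_cols C S) u v \<longleftrightarrow> border S u v"
  by (simp add: border_def)

text \<open>Restricting tiles to a set C of columns creates new border segments only on the
  boundary of C.  So if two restricted tiles of a tiling share a border segment, either the
  tiles themselves share it, or they share the half-cell next to it: in both cases they are
  the same tile.\<close>

lemma tilings_restrict_cols_border:
  assumes T: "T \<in> tilings R" and \<eta>: "\<eta> \<in> T" "\<eta>' \<in> T"
    and bd: "border (restrict_cols C \<eta>) u v" "border (restrict_cols C \<eta>') u v"
  shows "\<eta> = \<eta>'"
proof (rule ccontr)
  assume ne: "\<eta> \<noteq> \<eta>'"
  then have d: "\<eta> \<inter> \<eta>' = {}" using tilings_disjoint[OF T \<eta>] by blast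
  show False
  proof (cases "u - 1 \<in> C \<and> u \<in> C")
    case True
    then have "border \<eta> u v" "border \<eta>' u v" using bd border_restrict_cols by auto
    then show False using tilings_border[OF T \<eta>] ne by blast
  next
    case False
    then have "((u - 1, v) \<in> \<eta> \<and> (u - 1, v) \<in> \<eta>') \<or> ((u, v) \<in> \<eta> \<and> (u, v) \<in> \<eta>')"
      using bd unfolding border_def by auto
    then show False using d by blast
  qed
qed

lemma tilings_restrict_cols:
  assumes T: "T \<in> tilings R"
    and pieces: "\<And>\<eta>. \<eta> \<in> T \<Longrightarrow> restrict_cols C \<eta> \<noteq> {} \<Longrightarrow> is_trunc_tile (restrict_cols C \<eta>)"
  shows "restrict_cols C ` T - {{}} \<in> tilings (restrict_cols C R)"
proof (rule tilingsI)
  fix a assume "a \<in> restrict_cols C ` T - {{}}"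
  then show "is_trunc_tile a \<and> a \<subseteq> restrict_cols C R"
    using pieces tilings_subset[OF T] restrict_cols_mono by blast
next
  fix a b assume "a \<in> restrict_cols C ` T - {{}}" "b \<in> restrict_cols C ` T - {{}}" "a \<noteq> b"
  then show "a \<inter> b = {}" using tilings_disjoint[OF T] restrict_cols_subset by blast
next
  fix a assume a: "a \<in> restrict_cols C ` T - {{}}" and s: "shift a \<inter> restrict_cols C R \<noteq> {}"
  obtain \<eta> where \<eta>: "\<eta> \<in> T" "a = restrict_cols C \<eta>" "a \<noteq> {}" using a by blast
  have "shift \<eta> \<inter> R \<noteq> {}" using s \<eta>(2) shift_restrict_cols restrict_cols_subset by blast
  then obtain \<eta>' where \<eta>': "\<eta>' \<in> T" "\<eta>' \<noteq> \<eta>" "shift \<eta> \<subseteq> \<eta>'" using tilings_shift[OF T \<eta>(1)] by blast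
  have sub: "shift a \<subseteq> restrict_cols C \<eta>'"
    using \<eta>(2) \<eta>'(3) shift_restrict_cols restrict_cols_mono by metis
  have "shift a \<noteq> {}" using \<eta>(3) by (simp add: shift_def)
  then have ne: "restrict_cols C \<eta>' \<noteq> {}" using sub by blast
  have "restrict_cols C \<eta>' \<noteq> a"
    using tilings_disjoint[OF T \<eta>(1) \<eta>'(1)] \<eta>'(2) \<eta>(2,3) ne restrict_cols_subset by blast
  then show "\<exists>\<eta>'\<in>restrict_cols C ` T - {{}}. \<eta>' \<noteq> a \<and> shift a \<subseteq> \<eta>'" using \<eta>'(1) ne sub by blast
next
  fix a b u v assume a: "a \<in> restrict_cols C ` T - {{}}" and b: "b \<in> restrict_cols C ` T - {{}}"
    and bd: "border a u v" "border b u v"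
  obtain \<eta> \<eta>' where e: "\<eta> \<in> T" "a = restrict_cols C \<eta>" "\<eta>' \<in> T" "b = restrict_cols C \<eta>'"
    using a b by blast
  have "\<eta> = \<eta>'" using tilings_restrict_cols_border[OF T e(1,3)] bd e(2,4) by simp
  then show "a = b" using e(2,4) by simp
qed

abbreviation left_part :: "int \<Rightarrow> (int \<times> int) set \<Rightarrow> (int \<times> int) set" where
  "left_part L \<equiv> restrict_cols {..<L}"

abbreviation right_part :: "int \<Rightarrow> (int \<times> int) set \<Rightarrow> (int \<times> int) set" where
  "right_part L \<equiv> restrict_cols {L..}"

lemma left_right_parts: "left_part L S \<union> right_part L S = S"
  by (auto simp: restrict_cols_def)

lemma left_right_nonempty: "S \<noteq> {} \<Longrightarrow> left_part L S \<noteq> {} \<or> right_part L S \<noteq> {}"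
  using left_right_parts[of L S] by auto

lemma card_left_right_parts: "finite S \<Longrightarrow> card S = card (left_part L S) + card (right_part L S)"
proof -
  assume "finite S"
  moreover have "left_part L S \<inter> right_part L S = {}" by (auto simp: restrict_cols_def)
  ultimately show ?thesis
    using card_Un_disjoint[of "left_part L S" "right_part L S"] left_right_parts[of L S]
    by (metis finite_Un)
qed

definition meets :: "int \<Rightarrow> (int \<times> int) set \<Rightarrow> (int \<times> int) set \<Rightarrow> bool" where
  "meets L A B \<longleftrightarrow> (\<exists>v. odd (L + v) \<and> (L - 1, v) \<in> A \<and> (L, v) \<in> B)"

section \<open>Cutting tiles at a column\<close>

lemma tile_left_of: "k0 + int (length ws) \<le> L \<Longrightarrow>
    left_part L (tile k0 v0 ws) = tile k0 v0 ws \<and> right_part L (tile k0 v0 ws) = {}"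
  by (auto simp: restrict_cols_def mem_tile)

lemma tile_right_of: "L \<le> k0 \<Longrightarrow>
    left_part L (tile k0 v0 ws) = {} \<and> right_part L (tile k0 v0 ws) = tile k0 v0 ws"
  by (auto simp: restrict_cols_def mem_tile)

lemma tile_split:
  assumes "k0 < L" "L < k0 + int (length ws)" "vh v0 ws (nat (L - k0)) = v0"
  shows "left_part L (tile k0 v0 ws) = tile k0 v0 (take (nat (L - k0)) ws)"
    and "right_part L (tile k0 v0 ws) = tile L v0 (drop (nat (L - k0)) ws)"
proof -
  define m where "m = nat (L - k0)"
  have m: "L = k0 + int m" "m < length ws" using assms unfolding m_def by auto
  have e: "tile k0 v0 ws = tile k0 v0 (take m ws) \<union> tile L v0 (drop m ws)"
    using tile_append[of k0 v0 "take m ws" "drop m ws"] assms(3) m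
    unfolding m_def[symmetric] by (simp add: vh_take)
  show "left_part L (tile k0 v0 ws) = tile k0 v0 (take (nat (L - k0)) ws)"
    unfolding m_def[symmetric] e restrict_cols_Un
    using tile_left_of[of k0 "take m ws" L v0] tile_right_of[of L L v0 "drop m ws"] m by simp
  show "right_part L (tile k0 v0 ws) = tile L v0 (drop (nat (L - k0)) ws)"
    unfolding m_def[symmetric] e restrict_cols_Un
    using tile_left_of[of k0 "take m ws" L v0] tile_right_of[of L L v0 "drop m ws"] m by simp
qed

lemma tile_split_at_base:
  assumes p: "odd (k0 + v0)" "dyck ws" and mid: "k0 < L" "L < k0 + int (length ws)"
    and base: "vh v0 ws (nat (L - k0)) = v0"
  shows "is_trunc_tile (left_part L (tile k0 v0 ws))" "is_trunc_tile (right_part L (tile k0 v0 ws))"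
    and "meets L (left_part L (tile k0 v0 ws)) (right_part L (tile k0 v0 ws))"
proof -
  define m where "m = nat (L - k0)"
  have m: "L = k0 + int m" "0 < m" "m < length ws" using mid unfolding m_def by auto
  have base_m: "vh v0 ws m = v0" using base unfolding m_def .
  then have diag: "vh 0 ws m = 0" using vh_base[of v0 ws m] by simp
  have "even (vh v0 ws m - v0 - int m)" by (rule vh_parity) (use m in simp)
  then have "even (int m)" using base_m by simp
  then have odd_L: "odd (L + v0)" using m(1) p(1) by presburger
  have pieces: "left_part L (tile k0 v0 ws) = tile k0 v0 (take m ws)"
    "right_part L (tile k0 v0 ws) = tile L v0 (drop m ws)"
    using tile_split[OF mid base] unfolding m_def by auto
  show "is_trunc_tile (left_part L (tile k0 v0 ws))" unfolding pieces is_trunc_tile_iff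
    using p(1) dyck_take[OF p(2) diag] m by (intro exI[of _ k0] exI[of _ v0] exI[of _ "take m ws"]) auto
  show "is_trunc_tile (right_part L (tile k0 v0 ws))" unfolding pieces is_trunc_tile_iff
    using odd_L dyck_drop[OF p(2) _ diag] m by (intro exI[of _ L] exI[of _ v0] exI[of _ "drop m ws"]) auto
  have "nat (L - 1 - k0) = m - 1" "Suc (m - 1) = m" using m by auto
  then have "(L - 1, v0) \<in> tile k0 v0 ws" unfolding mem_tile using m base_m by auto
  moreover have "(L, v0) \<in> tile k0 v0 ws" unfolding mem_tile using m base m_def by auto
  ultimately show "meets L (left_part L (tile k0 v0 ws)) (right_part L (tile k0 v0 ws))"
    unfolding meets_def using odd_L by auto
qed

locale column_cut =
  fixes L :: int and R :: "(int \<times> int) set"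
  assumes even_L: "even L"
    and positive: "\<And>k v. (k, v) \<in> R \<Longrightarrow> 1 \<le> v"
    and down_closed: "\<And>k v v'. (k, v) \<in> R \<Longrightarrow> k = L - 1 \<or> k = L \<Longrightarrow> 1 \<le> v' \<Longrightarrow> v' \<le> v \<Longrightarrow> (k, v') \<in> R"
begin

text \<open>The key geometric fact: a tile of a tiling of R crossing column L does so at its base
  height.  Otherwise its translate by (1,-1) still meets R (downward closure), so by
  condition (i) it lies in another tile, which crosses L two units lower but has a lower
  base; induction on the crossing height leads to a contradiction.\<close>

lemma tile_crosses_at_base:
  assumes T: "T \<in> tilings R"
  shows "tile k0 v0 ws \<in> T \<Longrightarrow> odd (k0 + v0) \<Longrightarrow> dyck ws \<Longrightarrow> k0 < L \<Longrightarrow> L < k0 + int (length ws)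
     \<Longrightarrow> vh v0 ws (nat (L - k0)) = v0"
proof (induction "nat (vh v0 ws (nat (L - k0)))" arbitrary: k0 v0 ws rule: less_induct)
  case less
  define m where "m = nat (L - k0)"
  define h where "h = vh v0 ws m"
  let ?\<eta> = "tile k0 v0 ws"
  have Lm: "L = k0 + int m" "0 < m" "m < length ws" using less.prems unfolding m_def by auto
  have left_cell: "(L - 1, h) \<in> ?\<eta>"
  proof -
    have "nat (L - 1 - k0) = m - 1" "Suc (m - 1) = m" using Lm by auto
    then show ?thesis unfolding mem_tile h_def using Lm by auto
  qed
  have right_cell: "(L, h) \<in> ?\<eta>" unfolding mem_tile h_def using Lm m_def by auto
  have base_cell: "(k0, v0) \<in> ?\<eta>" unfolding mem_tile using Lm by auto
  have sub: "?\<eta> \<subseteq> R" using tilings_subset[OF T less.prems(1)] .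
  have v0_pos: "1 \<le> v0" using positive base_cell sub by blast
  have h_ge: "v0 \<le> h" using tile_above_base[OF less.prems(3) right_cell] .
  have "even (h - v0 - int m)" unfolding h_def by (rule vh_parity) (use Lm in simp)
  then have h_odd: "odd h" using Lm(1) less.prems(2) even_L by presburger
  show ?case
  proof (cases "shift ?\<eta> \<inter> R = {}")
    case True
    have "(L - 1, h - 2) \<in> shift ?\<eta>" using left_cell by (simp add: mem_shift)
    then have "(L - 1, h - 2) \<notin> R" using True by blast
    then have "h \<le> 2" using down_closed[of "L - 1" h "h - 2"] left_cell sub by fastforce
    then show ?thesis using h_odd h_ge v0_pos unfolding h_def m_def by presburger
  next
    case False
    then obtain \<eta>' where \<eta>': "\<eta>' \<in> T" "shift ?\<eta> \<subseteq> \<eta>'" using tilings_shift[OF T less.prems(1)] by blast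
    obtain k0' v0' ws' where p': "odd (k0' + v0')" "dyck ws'" "\<eta>' = tile k0' v0' ws'"
      using tilings_tile_params[OF T \<eta>'(1)] by metis
    have shifted: "(k, v - 2) \<in> \<eta>'" if "(k, v) \<in> ?\<eta>" for k v
      using that \<eta>'(2) mem_shift[of k "v - 2"] by auto
    have k0': "k0' < L" "L < k0' + int (length ws')"
      using shifted[OF left_cell] shifted[OF right_cell] unfolding p'(3) mem_tile by auto
    have "odd (L + (h - 2))" using h_odd even_L by presburger
    then have h2: "h - 2 = vh v0' ws' (nat (L - k0'))"
      using shifted[OF right_cell] tile_odd_cell[OF p'(1)] p'(3) by blast
    have "nat (vh v0' ws' (nat (L - k0'))) < nat (vh v0 ws (nat (L - k0)))"
      using h2 v0_pos h_ge unfolding h_def m_def by linarith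
    from less.hyps[OF this] p' \<eta>'(1) k0' h2 have "h - 2 = v0'" by simp
    moreover have "v0' \<le> v0 - 2" using tile_above_base[OF p'(2)] shifted[OF base_cell] p'(3) by blast
    ultimately show ?thesis using h_ge unfolding h_def m_def by linarith
  qed
qed

lemma cut_pieces:
  assumes T: "T \<in> tilings R" and \<eta>: "\<eta> \<in> T"
  shows "left_part L \<eta> \<noteq> {} \<Longrightarrow> is_trunc_tile (left_part L \<eta>)"
    and "right_part L \<eta> \<noteq> {} \<Longrightarrow> is_trunc_tile (right_part L \<eta>)"
    and "left_part L \<eta> \<noteq> {} \<Longrightarrow> right_part L \<eta> \<noteq> {} \<Longrightarrow> meets L (left_part L \<eta>) (right_part L \<eta>)"
proof -
  obtain k0 v0 ws where p: "odd (k0 + v0)" "dyck ws" "\<eta> = tile k0 v0 ws"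
    using tilings_tile_params[OF T \<eta>] by metis
  have tile: "is_trunc_tile \<eta>" using tilings_tile[OF T \<eta>] .
  consider "k0 + int (length ws) \<le> L" | "L \<le> k0" | (mid) "k0 < L" "L < k0 + int (length ws)"
    by linarith
  then have "(left_part L \<eta> \<noteq> {} \<longrightarrow> is_trunc_tile (left_part L \<eta>))
     \<and> (right_part L \<eta> \<noteq> {} \<longrightarrow> is_trunc_tile (right_part L \<eta>))
     \<and> (left_part L \<eta> \<noteq> {} \<longrightarrow> right_part L \<eta> \<noteq> {} \<longrightarrow> meets L (left_part L \<eta>) (right_part L \<eta>))"
  proof cases
    case mid
    then show ?thesis
      using tile_split_at_base[OF p(1,2) mid tile_crosses_at_base[OF T \<eta>[unfolded p(3)] p(1,2) mid]] p(3)
      by simp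
  qed (use tile p(3) tile_left_of tile_right_of in simp)+
  then show "left_part L \<eta> \<noteq> {} \<Longrightarrow> is_trunc_tile (left_part L \<eta>)"
    and "right_part L \<eta> \<noteq> {} \<Longrightarrow> is_trunc_tile (right_part L \<eta>)"
    and "left_part L \<eta> \<noteq> {} \<Longrightarrow> right_part L \<eta> \<noteq> {} \<Longrightarrow> meets L (left_part L \<eta>) (right_part L \<eta>)"
    by blast+
qed

lemma tilings_left: "T \<in> tilings R \<Longrightarrow> left_part L ` T - {{}} \<in> tilings (left_part L R)"
  using tilings_restrict_cols cut_pieces(1) by blast

lemma tilings_right: "T \<in> tilings R \<Longrightarrow> right_part L ` T - {{}} \<in> tilings (right_part L R)"
  using tilings_restrict_cols cut_pieces(2) by blast

end

section \<open>Gluing tilings of the two sides\<close>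

text \<open>The inverse of cutting: a left piece and a right piece meeting across the column are
  glued into one tile, unmatched pieces are kept.  We describe the glued tiling by how its
  tiles look on either side of the cut.\<close>

definition glue :: "int \<Rightarrow> (int \<times> int) set set \<Rightarrow> (int \<times> int) set set \<Rightarrow> (int \<times> int) set set" where
  "glue L T1 T2 = {S. S \<noteq> {}
     \<and> (left_part L S \<noteq> {} \<longrightarrow> left_part L S \<in> T1)
     \<and> (right_part L S \<noteq> {} \<longrightarrow> right_part L S \<in> T2)
     \<and> (left_part L S \<noteq> {} \<longrightarrow> right_part L S \<noteq> {} \<longrightarrow> meets L (left_part L S) (right_part L S))
     \<and> (left_part L S \<noteq> {} \<longrightarrow> right_part L S = {} \<longrightarrow> (\<forall>B\<in>T2. \<not> meets L (left_part L S) B))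
     \<and> (left_part L S = {} \<longrightarrow> right_part L S \<noteq> {} \<longrightarrow> (\<forall>A\<in>T1. \<not> meets L A (right_part L S)))}"

lemma glueD:
  assumes "S \<in> glue L T1 T2"
  shows "S \<noteq> {}"
    and "left_part L S \<noteq> {} \<Longrightarrow> left_part L S \<in> T1"
    and "right_part L S \<noteq> {} \<Longrightarrow> right_part L S \<in> T2"
    and "left_part L S \<noteq> {} \<Longrightarrow> right_part L S \<noteq> {} \<Longrightarrow> meets L (left_part L S) (right_part L S)"
    and "left_part L S \<noteq> {} \<Longrightarrow> right_part L S = {} \<Longrightarrow> B \<in> T2 \<Longrightarrow> \<not> meets L (left_part L S) B"
    and "left_part L S = {} \<Longrightarrow> right_part L S \<noteq> {} \<Longrightarrow> A \<in> T1 \<Longrightarrow> \<not> meets L A (right_part L S)"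
  using assms unfolding glue_def by blast+

lemma glueI:
  assumes "S \<noteq> {}"
    and "left_part L S \<noteq> {} \<Longrightarrow> left_part L S \<in> T1"
    and "right_part L S \<noteq> {} \<Longrightarrow> right_part L S \<in> T2"
    and "left_part L S \<noteq> {} \<Longrightarrow> right_part L S \<noteq> {} \<Longrightarrow> meets L (left_part L S) (right_part L S)"
    and "\<And>B. left_part L S \<noteq> {} \<Longrightarrow> right_part L S = {} \<Longrightarrow> B \<in> T2 \<Longrightarrow> \<not> meets L (left_part L S) B"
    and "\<And>A. left_part L S = {} \<Longrightarrow> right_part L S \<noteq> {} \<Longrightarrow> A \<in> T1 \<Longrightarrow> \<not> meets L A (right_part L S)"
  shows "S \<in> glue L T1 T2"
  using assms unfolding glue_def by blast

context column_cut
begin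

context
  fixes T1 T2
  assumes T1: "T1 \<in> tilings (left_part L R)" and T2: "T2 \<in> tilings (right_part L R)"
begin

lemma left_tile:
  assumes "A \<in> T1"
  shows "left_part L A = A" "right_part L A = {}" "A \<noteq> {}" "A \<subseteq> R"
  using tilings_subset[OF T1 assms] trunc_tile_nonempty[OF tilings_tile[OF T1 assms]]
  by (auto simp: restrict_cols_def)

lemma right_tile:
  assumes "B \<in> T2"
  shows "right_part L B = B" "left_part L B = {}" "B \<noteq> {}" "B \<subseteq> R"
  using tilings_subset[OF T2 assms] trunc_tile_nonempty[OF tilings_tile[OF T2 assms]]
  by (auto simp: restrict_cols_def)

text \<open>Each piece meets at most one piece on the other side: the meeting half-cell of a left
  piece is its unique even cell in column L - 1, that of a right piece its unique odd cell
  in column L.\<close>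

lemma meets_right_unique: "A \<in> T1 \<Longrightarrow> B \<in> T2 \<Longrightarrow> B' \<in> T2 \<Longrightarrow> meets L A B \<Longrightarrow> meets L A B' \<Longrightarrow> B = B'"
proof -
  assume h: "A \<in> T1" "B \<in> T2" "B' \<in> T2" "meets L A B" "meets L A B'"
  then obtain v v' where v: "odd (L + v)" "(L - 1, v) \<in> A" "(L, v) \<in> B"
    "odd (L + v')" "(L - 1, v') \<in> A" "(L, v') \<in> B'"
    unfolding meets_def by blast
  have "v = v'"
    by (rule tile_unique_even_cell[OF tilings_tile[OF T1 h(1)] v(2) v(5)]) (use v in presburger)+
  then show "B = B'" using v tilings_disjoint[OF T2 h(2,3)] by blast
qed

lemma meets_left_unique: "A \<in> T1 \<Longrightarrow> A' \<in> T1 \<Longrightarrow> B \<in> T2 \<Longrightarrow> meets L A B \<Longrightarrow> meets L A' B \<Longrightarrow> A = A'"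
proof -
  assume h: "A \<in> T1" "A' \<in> T1" "B \<in> T2" "meets L A B" "meets L A' B"
  then obtain v v' where v: "odd (L + v)" "(L - 1, v) \<in> A" "(L, v) \<in> B"
    "odd (L + v')" "(L - 1, v') \<in> A'" "(L, v') \<in> B"
    unfolding meets_def by blast
  have "v = v'"
    by (rule tile_unique_odd_cell[OF tilings_tile[OF T2 h(3)] v(3) v(6)]) (use v in presburger)+
  then show "A = A'" using v tilings_disjoint[OF T1 h(1,2)] by blast
qed

text \<open>Two meeting pieces form a tile: the left one ends at column L - 1 back on its base
  height, which is where the right one starts.\<close>

lemma meeting_pieces_tile:
  assumes A: "A \<in> T1" and B: "B \<in> T2" and m: "meets L A B"
  shows "is_trunc_tile (A \<union> B)"
proof -
  obtain v where v: "odd (L + v)" "(L - 1, v) \<in> A" "(L, v) \<in> B" using m unfolding meets_def by blast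
  obtain k0 v0 w1 where p1: "odd (k0 + v0)" "dyck w1" "w1 \<noteq> []" "A = tile k0 v0 w1"
    using tilings_tile_params[OF T1 A] by metis
  obtain k0' v0' w2 where p2: "odd (k0' + v0')" "dyck w2" "w2 \<noteq> []" "B = tile k0' v0' w2"
    using tilings_tile_params[OF T2 B] by metis
  have A_left: "k < L" if "(k, v) \<in> A" for k v using that left_tile(1)[OF A] by force
  have B_right: "L \<le> k" if "(k, v) \<in> B" for k v using that right_tile(1)[OF B] by force
  have "(k0 + int (length w1) - 1, vh v0 w1 (length w1)) \<in> A"
  proof -
    have "nat (k0 + int (length w1) - 1 - k0) = length w1 - 1" "Suc (length w1 - 1) = length w1"
      using p1(3) by auto
    then show ?thesis unfolding p1(4) mem_tile using p1(3) by auto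
  qed
  then have "k0 + int (length w1) \<le> L" using A_left by fastforce
  moreover have "even ((L - 1) + v)" using v(1) by presburger
  then have a1: "L - 1 < k0 + int (length w1)" "v = vh v0 w1 (Suc (nat (L - 1 - k0)))" "k0 \<le> L - 1"
    using v(2)[unfolded p1(4)] tile_even_cell[OF p1(1)] by auto
  ultimately have A_end: "k0 + int (length w1) = L" "Suc (nat (L - 1 - k0)) = length w1" by linarith+
  then have vv0: "v = v0" using a1(2) dyck_end[OF p1(2)] vh_base[of v0 w1 "length w1"] by simp
  have "(k0', v0') \<in> B" unfolding p2(4) mem_tile using p2(3) by auto
  then have "L \<le> k0'" using B_right by blast
  moreover have "k0' \<le> L" "v = vh v0' w2 (nat (L - k0'))"
    using v(3)[unfolded p2(4)] tile_odd_cell[OF p2(1) v(1)] by auto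
  ultimately have B_start: "k0' = L" "v = v0'" by auto
  have "A \<union> B = tile k0 v0 (w1 @ w2)"
    unfolding tile_append p1(4) p2(4)
    using A_end B_start vv0 dyck_end[OF p1(2)] vh_base[of v0 w1 "length w1"] by simp
  then show ?thesis unfolding is_trunc_tile_iff using p1 p2 dyck_append[OF p1(2) p2(2)]
    by (intro exI[of _ k0] exI[of _ v0] exI[of _ "w1 @ w2"]) auto
qed

lemma glue_pair: "A \<in> T1 \<Longrightarrow> B \<in> T2 \<Longrightarrow> meets L A B \<Longrightarrow> A \<union> B \<in> glue L T1 T2"
  using left_tile[of A] right_tile[of B] by (intro glueI) (auto simp: restrict_cols_Un)

lemma glue_covers_left: "A \<in> T1 \<Longrightarrow> \<exists>S\<in>glue L T1 T2. left_part L S = A"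
proof -
  assume A: "A \<in> T1"
  show ?thesis
  proof (cases "\<exists>B\<in>T2. meets L A B")
    case True
    then obtain B where B: "B \<in> T2" "meets L A B" by blast
    then show ?thesis using glue_pair[OF A B] left_tile[OF A] right_tile[OF B(1)]
      by (metis restrict_cols_Un sup_bot_right)
  next
    case False
    then have "A \<in> glue L T1 T2" using left_tile[OF A] A by (intro glueI) auto
    then show ?thesis using left_tile[OF A] by blast
  qed
qed

lemma glue_covers_right: "B \<in> T2 \<Longrightarrow> \<exists>S\<in>glue L T1 T2. right_part L S = B"
proof -
  assume B: "B \<in> T2"
  show ?thesis
  proof (cases "\<exists>A\<in>T1. meets L A B")
    case True
    then obtain A where A: "A \<in> T1" "meets L A B" by blast
    then show ?thesis using glue_pair[OF A(1) B A(2)] left_tile[OF A(1)] right_tile[OF B]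
      by (metis restrict_cols_Un sup_bot_left)
  next
    case False
    then have "B \<in> glue L T1 T2" using right_tile[OF B] B by (intro glueI) auto
    then show ?thesis using right_tile[OF B] by blast
  qed
qed

lemma glue_eq_by_left:
  assumes S: "S \<in> glue L T1 T2" and S': "S' \<in> glue L T1 T2"
    and e: "left_part L S = left_part L S'" and ne: "left_part L S \<noteq> {}"
  shows "S = S'"
proof -
  note d = glueD[OF S] and d' = glueD[OF S']
  have "right_part L S = right_part L S'"
    using d(2-6) d'(2-6) meets_right_unique[OF d(2)[OF ne]] e ne by metis
  then show ?thesis using e left_right_parts by metis
qed

lemma glue_eq_by_right:
  assumes S: "S \<in> glue L T1 T2" and S': "S' \<in> glue L T1 T2"
    and e: "right_part L S = right_part L S'" and ne: "right_part L S \<noteq> {}"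
  shows "S = S'"
proof -
  note d = glueD[OF S] and d' = glueD[OF S']
  have "left_part L S = left_part L S'"
    using d(2-6) d'(2-6) meets_left_unique[OF _ _ d(3)[OF ne]] e ne by metis
  then show ?thesis using e left_right_parts by metis
qed

end

end

context column_cut
begin

context
  fixes T1 T2
  assumes T1: "T1 \<in> tilings (left_part L R)" and T2: "T2 \<in> tilings (right_part L R)"
begin

lemma glue_disjoint:
  assumes S: "S \<in> glue L T1 T2" and S': "S' \<in> glue L T1 T2" and ne: "S \<noteq> S'"
  shows "S \<inter> S' = {}"
proof -
  have l: "left_part L S \<inter> left_part L S' = {}"
    using glueD(2)[OF S] glueD(2)[OF S'] glue_eq_by_left[OF T1 T2 S S'] ne tilings_disjoint[OF T1]
    by blast
  moreover have r: "right_part L S \<inter> right_part L S' = {}"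
    using glueD(3)[OF S] glueD(3)[OF S'] glue_eq_by_right[OF T1 T2 S S'] ne tilings_disjoint[OF T2]
    by blast
  show ?thesis
  proof (rule equals0I, clarify)
    fix k v assume "(k, v) \<in> S" "(k, v) \<in> S'"
    then have "(k, v) \<in> left_part L S \<inter> left_part L S' \<or> (k, v) \<in> right_part L S \<inter> right_part L S'"
      by (cases "k < L") auto
    then show False using l r by blast
  qed
qed

lemma glue_tile:
  assumes S: "S \<in> glue L T1 T2"
  shows "is_trunc_tile S" "S \<subseteq> R"
proof -
  note d = glueD[OF S]
  have e: "S = left_part L S \<union> right_part L S" using left_right_parts by metis
  consider "right_part L S = {}" "left_part L S \<in> T1" | "left_part L S = {}" "right_part L S \<in> T2"
    | "left_part L S \<in> T1" "right_part L S \<in> T2" "meets L (left_part L S) (right_part L S)"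
    using left_right_nonempty[OF d(1)] d(2-4) by blast
  then have "is_trunc_tile S \<and> S \<subseteq> R"
  proof cases
    case 1
    then show ?thesis using e tilings_tile[OF T1] left_tile(4)[OF T1 T2] by auto
  next
    case 2
    then show ?thesis using e tilings_tile[OF T2] right_tile(4)[OF T1 T2] by auto
  next
    case 3
    then show ?thesis
      using meeting_pieces_tile[OF T1 T2 3] left_tile(4)[OF T1 T2 3(1)] right_tile(4)[OF T1 T2 3(2)]
      by (metis e Un_subset_iff)
  qed
  then show "is_trunc_tile S" "S \<subseteq> R" by auto
qed

lemma glue_no_cross_meeting:
  assumes S: "S \<in> glue L T1 T2" and S': "S' \<in> glue L T1 T2" and v: "odd (L + v)"
    and cells: "(L - 1, v) \<in> S" "(L, v) \<notin> S" "(L, v) \<in> S'"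
  shows False
proof -
  have inA: "(L - 1, v) \<in> left_part L S" and inB: "(L, v) \<in> right_part L S'"
    using cells by simp_all
  then have neA: "left_part L S \<noteq> {}" and A: "left_part L S \<in> T1" and B: "right_part L S' \<in> T2"
    using glueD(2)[OF S] glueD(3)[OF S'] by blast+
  have m: "meets L (left_part L S) (right_part L S')" unfolding meets_def using cells v by auto
  show False
  proof (cases "right_part L S = {}")
    case True
    then show False using glueD(5)[OF S neA True B] m by blast
  next
    case False
    have "right_part L S = right_part L S'"
      using meets_right_unique[OF T1 T2 A glueD(3)[OF S False] B glueD(4)[OF S neA False] m] .
    then show False using inB cells(2) by (metis mem_restrict_cols)
  qed
qed

text \<open>Condition (i) for a single piece: its translate lies on the same side of the cut.\<close>

lemma left_shift_covered:
  assumes A: "A \<in> T1" and sh: "shift A \<inter> R \<noteq> {}"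
  shows "\<exists>A'\<in>T1. A' \<noteq> A \<and> shift A \<subseteq> A'"
proof -
  have "shift A = left_part L (shift A)" using left_tile(1)[OF T1 T2 A] shift_restrict_cols by metis
  then have "shift A \<inter> left_part L R = shift A \<inter> R" unfolding restrict_cols_def by blast
  then show ?thesis using tilings_shift[OF T1 A] sh by simp
qed

lemma right_shift_covered:
  assumes B: "B \<in> T2" and sh: "shift B \<inter> R \<noteq> {}"
  shows "\<exists>B'\<in>T2. B' \<noteq> B \<and> shift B \<subseteq> B'"
proof -
  have "shift B = right_part L (shift B)" using right_tile(1)[OF T1 T2 B] shift_restrict_cols by metis
  then have "shift B \<inter> right_part L R = shift B \<inter> R" unfolding restrict_cols_def by blast
  then show ?thesis using tilings_shift[OF T2 B] sh by simp
qed

text \<open>For a pair of meeting pieces whose union has its translate meeting R, the translate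
  of one piece meeting R forces the meeting height to be at least 3; downward closure then
  makes both translated pieces meet R, and their covering pieces meet two units lower.\<close>

lemma meeting_pieces_shift:
  assumes A: "A \<in> T1" and B: "B \<in> T2" and m: "meets L A B" and sh: "shift (A \<union> B) \<inter> R \<noteq> {}"
  obtains A' B' where "A' \<in> T1" "A' \<noteq> A" "shift A \<subseteq> A'" "B' \<in> T2" "shift B \<subseteq> B'" "meets L A' B'"
proof -
  obtain v where v: "odd (L + v)" "(L - 1, v) \<in> A" "(L, v) \<in> B"
    using m unfolding meets_def by blast
  have sA: "(L - 1, v - 2) \<in> shift A" and sB: "(L, v - 2) \<in> shift B"
    using v by (simp_all add: mem_shift)
  have "1 \<le> v - 2"
  proof -
    have "shift A \<inter> R \<noteq> {} \<or> shift B \<inter> R \<noteq> {}" using sh shift_Un by auto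
    then obtain P where "P \<in> T1 \<and> shift A \<subseteq> P \<or> P \<in> T2 \<and> shift B \<subseteq> P"
      using left_shift_covered[OF A] right_shift_covered[OF B] by blast
    then have "(L - 1, v - 2) \<in> R \<or> (L, v - 2) \<in> R"
      using sA sB left_tile(4)[OF T1 T2] right_tile(4)[OF T1 T2] by blast
    then show ?thesis using positive by blast
  qed
  moreover have "(L - 1, v) \<in> R" "(L, v) \<in> R"
    using v(2,3) left_tile(4)[OF T1 T2 A] right_tile(4)[OF T1 T2 B] by auto
  ultimately have "(L - 1, v - 2) \<in> R" "(L, v - 2) \<in> R"
    using down_closed[of "L - 1" v "v - 2"] down_closed[of L v "v - 2"] by auto
  then have "shift A \<inter> R \<noteq> {}" "shift B \<inter> R \<noteq> {}" using sA sB by blast+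
  then obtain A' B' where A': "A' \<in> T1" "A' \<noteq> A" "shift A \<subseteq> A'" and B': "B' \<in> T2" "shift B \<subseteq> B'"
    using left_shift_covered[OF A] right_shift_covered[OF B] by blast
  have "odd (L + (v - 2))" using v(1) by presburger
  then have "meets L A' B'" unfolding meets_def using sA sB A'(3) B'(2) by blast
  with A' B' show ?thesis by (rule that)
qed

text \<open>Condition (i) for a glued tile: the covering tile of its translate is glued from the
  covering pieces of the translates of its sides.\<close>

lemma glue_shift:
  assumes S: "S \<in> glue L T1 T2" and sh: "shift S \<inter> R \<noteq> {}"
  shows "\<exists>S'\<in>glue L T1 T2. S' \<noteq> S \<and> shift S \<subseteq> S'"
proof -
  note d = glueD[OF S]
  have sh_e: "shift S = shift (left_part L S) \<union> shift (right_part L S)"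
    using shift_Un[of "left_part L S" "right_part L S"] by (simp add: left_right_parts)
  consider "left_part L S \<noteq> {}" "right_part L S = {}" | "left_part L S = {}" "right_part L S \<noteq> {}"
    | "left_part L S \<noteq> {}" "right_part L S \<noteq> {}"
    using left_right_nonempty[OF d(1)] by blast
  then show ?thesis
  proof cases
    case 1
    have shA: "shift S = shift (left_part L S)" using sh_e 1(2) by simp
    have "shift (left_part L S) \<inter> R \<noteq> {}" using sh shA by simp
    then obtain A' where A': "A' \<in> T1" "A' \<noteq> left_part L S" "shift (left_part L S) \<subseteq> A'"
      using left_shift_covered[OF d(2)[OF 1(1)]] by blast
    obtain S' where S': "S' \<in> glue L T1 T2" "left_part L S' = A'"
      using glue_covers_left[OF T1 T2 A'(1)] by blast
    have "shift S \<subseteq> S'" using shA A'(3) S'(2) restrict_cols_subset[of _ S'] by blast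
    moreover have "S' \<noteq> S" using S'(2) A'(2) by auto
    ultimately show ?thesis using S'(1) by blast
  next
    case 2
    have shB: "shift S = shift (right_part L S)" using sh_e 2(1) by simp
    have "shift (right_part L S) \<inter> R \<noteq> {}" using sh shB by simp
    then obtain B' where B': "B' \<in> T2" "B' \<noteq> right_part L S" "shift (right_part L S) \<subseteq> B'"
      using right_shift_covered[OF d(3)[OF 2(2)]] by blast
    obtain S' where S': "S' \<in> glue L T1 T2" "right_part L S' = B'"
      using glue_covers_right[OF T1 T2 B'(1)] by blast
    have "shift S \<subseteq> S'" using shB B'(3) S'(2) restrict_cols_subset[of _ S'] by blast
    moreover have "S' \<noteq> S" using S'(2) B'(2) by auto
    ultimately show ?thesis using S'(1) by blast
  next
    case 3
    have parts: "left_part L S \<union> right_part L S = S" by (rule left_right_parts)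
    obtain A' B' where A': "A' \<in> T1" "A' \<noteq> left_part L S" "shift (left_part L S) \<subseteq> A'"
      and B': "B' \<in> T2" "shift (right_part L S) \<subseteq> B'" and m': "meets L A' B'"
      using meeting_pieces_shift[OF d(2)[OF 3(1)] d(3)[OF 3(2)] d(4)[OF 3]] sh parts by metis
    have "left_part L (A' \<union> B') = A'"
      using left_tile(1)[OF T1 T2 A'(1)] right_tile(2)[OF T1 T2 B'(1)] by (simp add: restrict_cols_Un)
    then have "A' \<union> B' \<noteq> S" using A'(2) by auto
    moreover have "shift S \<subseteq> A' \<union> B'" using sh_e A'(3) B'(2) by blast
    ultimately show ?thesis using glue_pair[OF T1 T2 A'(1) B'(1) m'] by (intro bexI[of _ "A' \<union> B'"] conjI)
  qed
qed

text \<open>Away from the cut a common border segment would be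
  a common border segment of the pieces on one side; on the cut it would make a left piece of
  one glued tile meet a right piece of another.\<close>

lemma glue_border:
  assumes S: "S \<in> glue L T1 T2" and S': "S' \<in> glue L T1 T2" and bd: "border S u v" "border S' u v"
  shows "S = S'"
proof (rule ccontr)
  assume ne: "S \<noteq> S'"
  have dj: "S \<inter> S' = {}" using glue_disjoint[OF S S' ne] .
  consider (lt) "u < L" | (gt) "L < u" | (eq) "u = L" by linarith
  then show False
  proof cases
    case lt
    then have b: "border (left_part L S) u v" "border (left_part L S') u v"
      using bd border_restrict_cols[of u "{..<L}"] by auto
    then have "left_part L S \<noteq> {}" "left_part L S' \<noteq> {}" by (simp_all add: border_nonempty)
    then show False using tilings_border[OF T1 glueD(2)[OF S] glueD(2)[OF S'] b]
        glue_eq_by_left[OF T1 T2 S S'] ne by blast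
  next
    case gt
    then have b: "border (right_part L S) u v" "border (right_part L S') u v"
      using bd border_restrict_cols[of u "{L..}"] by auto
    then have "right_part L S \<noteq> {}" "right_part L S' \<noteq> {}" by (simp_all add: border_nonempty)
    then show False using tilings_border[OF T2 glueD(3)[OF S] glueD(3)[OF S'] b]
        glue_eq_by_right[OF T1 T2 S S'] ne by blast
  next
    case eq
    then have "odd (L + v)" "((L - 1, v) \<in> S) \<noteq> ((L, v) \<in> S)" "((L - 1, v) \<in> S') \<noteq> ((L, v) \<in> S')"
      using bd unfolding border_def by auto
    then show False using glue_no_cross_meeting[OF S S'] glue_no_cross_meeting[OF S' S] dj by blast
  qed
qed

lemma glue_tilings: "glue L T1 T2 \<in> tilings R"
proof (rule tilingsI)
  fix S assume "S \<in> glue L T1 T2"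
  then show "is_trunc_tile S \<and> S \<subseteq> R" using glue_tile by blast
next
  fix S S' assume "S \<in> glue L T1 T2" "S' \<in> glue L T1 T2" "S \<noteq> S'"
  then show "S \<inter> S' = {}" by (rule glue_disjoint)
next
  fix S assume "S \<in> glue L T1 T2" "shift S \<inter> R \<noteq> {}"
  then show "\<exists>S'\<in>glue L T1 T2. S' \<noteq> S \<and> shift S \<subseteq> S'" by (rule glue_shift)
next
  fix S S' u v assume "S \<in> glue L T1 T2" "S' \<in> glue L T1 T2" "border S u v" "border S' u v"
  then show "S = S'" by (rule glue_border)
qed

lemma cut_glue_left: "left_part L ` glue L T1 T2 - {{}} = T1"
proof
  show "left_part L ` glue L T1 T2 - {{}} \<subseteq> T1" using glueD(2) by blast
  show "T1 \<subseteq> left_part L ` glue L T1 T2 - {{}}"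
  proof
    fix A assume A: "A \<in> T1"
    then obtain S where "S \<in> glue L T1 T2" "left_part L S = A" using glue_covers_left[OF T1 T2] by blast
    then show "A \<in> left_part L ` glue L T1 T2 - {{}}" using left_tile(3)[OF T1 T2 A] by blast
  qed
qed

lemma cut_glue_right: "right_part L ` glue L T1 T2 - {{}} = T2"
proof
  show "right_part L ` glue L T1 T2 - {{}} \<subseteq> T2" using glueD(3) by blast
  show "T2 \<subseteq> right_part L ` glue L T1 T2 - {{}}"
  proof
    fix B assume B: "B \<in> T2"
    then obtain S where "S \<in> glue L T1 T2" "right_part L S = B" using glue_covers_right[OF T1 T2] by blast
    then show "B \<in> right_part L ` glue L T1 T2 - {{}}" using right_tile(3)[OF T1 T2 B] by blast
  qed
qed

end

text \<open>Every tile is recovered,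
  since a tile crossing the cut is the union of its two meeting pieces, while pieces of
  different tiles never meet (they would be adjacent across a slope -1 segment) \<dots>\<close>

lemma tiling_subset_glue_cut:
  assumes T: "T \<in> tilings R" and \<eta>: "\<eta> \<in> T"
  shows "\<eta> \<in> glue L (left_part L ` T - {{}}) (right_part L ` T - {{}})"
proof -
  have same: "\<eta>' = \<eta>" if "\<eta>' \<in> T" "meets L (left_part L \<eta>) (right_part L \<eta>') \<or>
      meets L (left_part L \<eta>') (right_part L \<eta>)" for \<eta>'
    using that(2) tilings_adjacent[OF T \<eta> that(1)] tilings_adjacent[OF T that(1) \<eta>]
    unfolding meets_def by auto
  show "\<eta> \<in> glue L (left_part L ` T - {{}}) (right_part L ` T - {{}})"
  proof (rule glueI)
    show "\<eta> \<noteq> {}" using trunc_tile_nonempty[OF tilings_tile[OF T \<eta>]] .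
    show "left_part L \<eta> \<in> left_part L ` T - {{}}" if "left_part L \<eta> \<noteq> {}"
      using that \<eta> by blast
    show "right_part L \<eta> \<in> right_part L ` T - {{}}" if "right_part L \<eta> \<noteq> {}"
      using that \<eta> by blast
    show "meets L (left_part L \<eta>) (right_part L \<eta>)"
      if "left_part L \<eta> \<noteq> {}" "right_part L \<eta> \<noteq> {}"
      using cut_pieces(3)[OF T \<eta> that] .
    show "\<not> meets L (left_part L \<eta>) B"
      if empty: "right_part L \<eta> = {}" and B: "B \<in> right_part L ` T - {{}}" for B
    proof
      assume m: "meets L (left_part L \<eta>) B"
      obtain \<eta>' where \<eta>': "\<eta>' \<in> T" "B = right_part L \<eta>'" "B \<noteq> {}" using B by blast
      then have "\<eta>' = \<eta>" using same m by blast
      then show False using empty \<eta>' by simp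
    qed
    show "\<not> meets L A (right_part L \<eta>)"
      if empty: "left_part L \<eta> = {}" and A: "A \<in> left_part L ` T - {{}}" for A
    proof
      assume m: "meets L A (right_part L \<eta>)"
      obtain \<eta>' where \<eta>': "\<eta>' \<in> T" "A = left_part L \<eta>'" "A \<noteq> {}" using A by blast
      then have "\<eta>' = \<eta>" using same m by blast
      then show False using empty \<eta>' by simp
    qed
  qed
qed

text \<open>\<dots> and nothing else is produced: a glued tile determines the tiles its sides come
  from, and these must coincide with it.\<close>

lemma glue_cut_subset_tiling:
  assumes T: "T \<in> tilings R" and S: "S \<in> glue L (left_part L ` T - {{}}) (right_part L ` T - {{}})"
  shows "S \<in> T"
proof -
  note d = glueD[OF S]
  have parts: "S = left_part L S \<union> right_part L S" using left_right_parts by metis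
  consider "left_part L S \<noteq> {}" "right_part L S = {}" | "left_part L S = {}" "right_part L S \<noteq> {}"
    | "left_part L S \<noteq> {}" "right_part L S \<noteq> {}"
    using left_right_nonempty[OF d(1)] by blast
  then show "S \<in> T"
  proof cases
    case 1
    then obtain \<eta> where \<eta>: "\<eta> \<in> T" "left_part L S = left_part L \<eta>" using d(2) by blast
    have "right_part L \<eta> \<in> right_part L ` T - {{}}" if "right_part L \<eta> \<noteq> {}"
      using that \<eta>(1) by blast
    then have "right_part L \<eta> = {}"
      using d(5)[OF 1] cut_pieces(3)[OF T \<eta>(1)] \<eta>(2) 1(1) by metis
    then have "S = \<eta>" using 1 \<eta>(2) parts left_right_parts[of L \<eta>] by simp
    then show ?thesis using \<eta>(1) by simp
  next
    case 2
    then obtain \<eta> where \<eta>: "\<eta> \<in> T" "right_part L S = right_part L \<eta>" using d(3) by blast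
    have "left_part L \<eta> \<in> left_part L ` T - {{}}" if "left_part L \<eta> \<noteq> {}"
      using that \<eta>(1) by blast
    then have "left_part L \<eta> = {}"
      using d(6)[OF 2] cut_pieces(3)[OF T \<eta>(1)] \<eta>(2) 2(2) by metis
    then have "S = \<eta>" using 2 \<eta>(2) parts left_right_parts[of L \<eta>] by simp
    then show ?thesis using \<eta>(1) by simp
  next
    case 3
    then obtain \<eta> \<eta>' where \<eta>: "\<eta> \<in> T" "left_part L S = left_part L \<eta>"
      and \<eta>': "\<eta>' \<in> T" "right_part L S = right_part L \<eta>'"
      using d(2,3) by blast
    obtain v where v: "odd (L + v)" "(L - 1, v) \<in> \<eta>" "(L, v) \<in> \<eta>'"
      using d(4)[OF 3] \<eta>(2) \<eta>'(2) unfolding meets_def by auto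
    have "\<eta> = \<eta>'" using tilings_adjacent[OF T \<eta>(1) \<eta>'(1) v(1)] v(2,3) by simp
    then have "S = \<eta>" using \<eta>(2) \<eta>'(2) parts left_right_parts[of L \<eta>] by simp
    then show ?thesis using \<eta>(1) by simp
  qed
qed

lemma glue_cut:
  assumes T: "T \<in> tilings R"
  shows "glue L (left_part L ` T - {{}}) (right_part L ` T - {{}}) = T"
  using tiling_subset_glue_cut[OF T] glue_cut_subset_tiling[OF T] by blast

lemma cut_bij:
  "bij_betw (\<lambda>T. (left_part L ` T - {{}}, right_part L ` T - {{}})) (tilings R)
     (tilings (left_part L R) \<times> tilings (right_part L R))"
proof (rule bij_betw_byWitness[where f' = "\<lambda>(T1, T2). glue L T1 T2"])
  show "\<forall>T\<in>tilings R. (\<lambda>(T1, T2). glue L T1 T2) (left_part L ` T - {{}}, right_part L ` T - {{}}) = T"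
    using glue_cut by simp
  show "\<forall>p\<in>tilings (left_part L R) \<times> tilings (right_part L R).
      (\<lambda>T. (left_part L ` T - {{}}, right_part L ` T - {{}})) ((\<lambda>(T1, T2). glue L T1 T2) p) = p"
    using cut_glue_left cut_glue_right by auto
  show "(\<lambda>T. (left_part L ` T - {{}}, right_part L ` T - {{}})) ` tilings R
      \<subseteq> tilings (left_part L R) \<times> tilings (right_part L R)"
    using tilings_left tilings_right by auto
  show "(\<lambda>(T1, T2). glue L T1 T2) ` (tilings (left_part L R) \<times> tilings (right_part L R)) \<subseteq> tilings R"
    using glue_tilings by auto
qed

text \<open>The statistic is additive under cutting: uncovered half-cells and half-lengths both
  split between the two sides.\<close>

lemma cut_statistic:
  assumes fin: "finite R" and T: "T \<in> tilings R"
  shows "card R - 2 * (\<Sum>\<eta>\<in>T. halflen \<eta>)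
       = (card (left_part L R) - 2 * (\<Sum>\<eta>\<in>left_part L ` T - {{}}. halflen \<eta>))
       + (card (right_part L R) - 2 * (\<Sum>\<eta>\<in>right_part L ` T - {{}}. halflen \<eta>))"
proof -
  let ?T1 = "left_part L ` T - {{}}" and ?T2 = "right_part L ` T - {{}}"
  have U: "\<Union>T \<subseteq> R" using tilings_subset[OF T] by blast
  have fin': "finite (left_part L R)" "finite (right_part L R)" "finite (\<Union>T)"
    using fin tilings_subset[OF T] finite_subset[of "\<Union>T" R] by (auto simp: restrict_cols_def)
  have "4 * (\<Sum>\<eta>\<in>T. halflen \<eta>) = card (left_part L (\<Union>T)) + card (right_part L (\<Union>T))"
    using tilings_halflen_sum[OF T fin] card_left_right_parts[OF fin'(3)] by simp
  moreover have "4 * (\<Sum>\<eta>\<in>?T1. halflen \<eta>) = card (left_part L (\<Union>T))"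
    using tilings_halflen_sum[OF tilings_left[OF T] fin'(1)] by (simp add: Union_restrict_cols)
  moreover have "4 * (\<Sum>\<eta>\<in>?T2. halflen \<eta>) = card (right_part L (\<Union>T))"
    using tilings_halflen_sum[OF tilings_right[OF T] fin'(2)] by (simp add: Union_restrict_cols)
  moreover have "card (left_part L (\<Union>T)) \<le> card (left_part L R)"
    "card (right_part L (\<Union>T)) \<le> card (right_part L R)"
    using fin'(1,2) U by (simp_all add: card_mono restrict_cols_mono)
  moreover have "card R = card (left_part L R) + card (right_part L R)"
    using card_left_right_parts[OF fin] .
  ultimately show ?thesis by linarith
qed

lemma tiling_poly_cut:
  assumes fin: "finite R"
  shows "tiling_poly t R = tiling_poly t (left_part L R) * tiling_poly t (right_part L R)"
proof -
  let ?cut = "\<lambda>T. (left_part L ` T - {{}}, right_part L ` T - {{}})"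
  let ?w = "\<lambda>R' T. t ^ (card R' - 2 * (\<Sum>\<eta>\<in>T. halflen \<eta>))"
  let ?g = "\<lambda>(T1, T2). ?w (left_part L R) T1 * ?w (right_part L R) T2"
  have "tiling_poly t R = (\<Sum>T\<in>tilings R. ?g (?cut T))"
    unfolding tiling_poly_def
    by (rule sum.cong[OF refl]) (simp add: cut_statistic[OF fin] power_add)
  also have "\<dots> = (\<Sum>p\<in>tilings (left_part L R) \<times> tilings (right_part L R). ?g p)"
    by (rule sum.reindex_bij_betw[OF cut_bij])
  also have "\<dots> = tiling_poly t (left_part L R) * tiling_poly t (right_part L R)"
    unfolding tiling_poly_def sum_product sum.cartesian_product by simp
  finally show ?thesis .
qed

end

section \<open>Translation invariance\<close>

definition translate :: "int \<Rightarrow> (int \<times> int) set \<Rightarrow> (int \<times> int) set" where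
  "translate d S = (\<lambda>(k, v). (k + d, v)) ` S"

lemma mem_translate [simp]: "(k, v) \<in> translate d S \<longleftrightarrow> (k - d, v) \<in> S"
  by (force simp: translate_def image_iff)

lemma translate_translate [simp]: "translate e (translate d A) = translate (d + e) A"
  by (auto simp: set_eq_iff algebra_simps)

lemma translate_0 [simp]: "translate 0 A = A"
  by (auto simp: set_eq_iff)

lemma inj_translate: "inj (translate d)"
  by (rule inj_on_inverseI[of _ "translate (- d)"]) simp

lemma translate_Int: "translate d (A \<inter> B) = translate d A \<inter> translate d B"
  by (auto simp: set_eq_iff)

lemma translate_mono: "A \<subseteq> B \<Longrightarrow> translate d A \<subseteq> translate d B"
  unfolding translate_def by blast

lemma translate_empty_iff [simp]: "translate d A = {} \<longleftrightarrow> A = {}"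
  unfolding translate_def by blast

lemma shift_translate: "shift (translate d A) = translate d (shift A)"
  by (auto simp: set_eq_iff mem_shift)

lemma card_translate: "card (translate d A) = card A"
  unfolding translate_def by (rule card_image) (auto simp: inj_on_def)

lemma translate_tile: "translate d (tile k0 v0 ws) = tile (k0 + d) v0 ws"
  by (rule set_eqI, clarify) (auto simp: mem_tile algebra_simps)

lemma border_translate: "even d \<Longrightarrow> border (translate d S) u v \<longleftrightarrow> border S (u - d) v"
  unfolding border_def by (auto simp: algebra_simps)

lemma is_trunc_tile_translate: "even d \<Longrightarrow> is_trunc_tile S \<Longrightarrow> is_trunc_tile (translate d S)"
proof -
  assume d: "even d" and "is_trunc_tile S"
  then obtain k0 v0 ws where p: "odd (k0 + v0)" "dyck ws" "ws \<noteq> []" "S = tile k0 v0 ws"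
    unfolding is_trunc_tile_iff by blast
  have "odd (k0 + d + v0)" using p(1) d by presburger
  then show ?thesis unfolding is_trunc_tile_iff p(4) translate_tile using p by blast
qed

lemma halflen_translate: "even d \<Longrightarrow> is_trunc_tile S \<Longrightarrow> halflen (translate d S) = halflen S"
  using halflen_card[of S] halflen_card[OF is_trunc_tile_translate, of d S] card_translate[of d S]
  by simp

lemma tilings_translate:
  assumes d: "even d" and T: "T \<in> tilings X"
  shows "translate d ` T \<in> tilings (translate d X)"
proof (rule tilingsI)
  fix a assume "a \<in> translate d ` T"
  then obtain x where x: "x \<in> T" "a = translate d x" by blast
  then show "is_trunc_tile a \<and> a \<subseteq> translate d X"
    using is_trunc_tile_translate[OF d tilings_tile[OF T x(1)]] translate_mono[OF tilings_subset[OF T x(1)]]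
    by simp
next
  fix a b assume a: "a \<in> translate d ` T" and b: "b \<in> translate d ` T" and ne: "a \<noteq> b"
  obtain x where x: "x \<in> T" "a = translate d x" using a by blast
  obtain y where y: "y \<in> T" "b = translate d y" using b by blast
  have "x \<noteq> y" using ne x(2) y(2) by auto
  then show "a \<inter> b = {}" using tilings_disjoint[OF T x(1) y(1)] x(2) y(2) by (simp add: translate_Int[symmetric])
next
  fix a assume a: "a \<in> translate d ` T" and s: "shift a \<inter> translate d X \<noteq> {}"
  obtain x where x: "x \<in> T" "a = translate d x" using a by blast
  have "shift x \<inter> X \<noteq> {}" using s x(2) by (simp add: shift_translate translate_Int[symmetric])
  then obtain y where y: "y \<in> T" "y \<noteq> x" "shift x \<subseteq> y" using tilings_shift[OF T x(1)] by blast
  have "translate d y \<noteq> a" using y(2) x(2) inj_eq[OF inj_translate] by simp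
  moreover have "shift a \<subseteq> translate d y" using y(3) x(2) by (simp add: shift_translate translate_mono)
  ultimately show "\<exists>\<eta>'\<in>translate d ` T. \<eta>' \<noteq> a \<and> shift a \<subseteq> \<eta>'"
    using y(1) by (intro bexI[of _ "translate d y"] conjI) auto
next
  fix a b u v assume a: "a \<in> translate d ` T" and b: "b \<in> translate d ` T"
    and bd: "border a u v" "border b u v"
  obtain x where x: "x \<in> T" "a = translate d x" using a by blast
  obtain y where y: "y \<in> T" "b = translate d y" using b by blast
  have "border x (u - d) v" "border y (u - d) v" using bd x(2) y(2) border_translate[OF d] by simp_all
  then have "x = y" by (rule tilings_border[OF T x(1) y(1)])
  then show "a = b" using x(2) y(2) by simp
qed

lemma tilings_translate_eq:
  assumes d: "even d"
  shows "tilings (translate d X) = image (translate d) ` tilings X"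
proof
  show "image (translate d) ` tilings X \<subseteq> tilings (translate d X)" using tilings_translate[OF d] by blast
  show "tilings (translate d X) \<subseteq> image (translate d) ` tilings X"
  proof
    fix T assume T: "T \<in> tilings (translate d X)"
    have "translate (- d) ` T \<in> tilings X" using tilings_translate[of "- d", OF _ T] d by simp
    moreover have "translate d ` translate (- d) ` T = T" by (simp add: image_image)
    ultimately show "T \<in> image (translate d) ` tilings X" by (metis imageI)
  qed
qed

lemma tiling_poly_translate:
  assumes d: "even d"
  shows "tiling_poly t (translate d X) = tiling_poly t X"
proof -
  have inj: "inj_on (image (translate d)) (tilings X)"
    by (rule inj_on_image) (rule inj_on_subset[OF inj_translate subset_UNIV])
  have "(\<Sum>\<eta>\<in>translate d ` T. halflen \<eta>) = (\<Sum>\<eta>\<in>T. halflen \<eta>)" if T: "T \<in> tilings X" for T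
    using sum.reindex[of "translate d" T halflen] inj_on_subset[OF inj_translate subset_UNIV]
      halflen_translate[OF d tilings_tile[OF T]] by simp
  then show ?thesis
    unfolding tiling_poly_def tilings_translate_eq[OF d] sum.reindex[OF inj]
    by (simp add: card_translate)
qed

section \<open>The region of a concatenated path\<close>

lemma mem_region: "(k, v) \<in> region lam mu a \<longleftrightarrow> 0 \<le> k \<and> k < int (length lam)
      \<and> min (vh 0 lam (nat k)) (vh 0 lam (nat k + 1)) < v
      \<and> v < max (vh (2 * int a) mu (nat k)) (vh (2 * int a) mu (nat k + 1))"
  by (simp add: region_def)

lemma finite_region: "finite (region lam mu a)"
proof (rule finite_subset)
  show "region lam mu a \<subseteq> (SIGMA k:{0..<int (length lam)}.
      {min (vh 0 lam (nat k)) (vh 0 lam (nat k + 1))<..<max (vh (2 * int a) mu (nat k)) (vh (2 * int a) mu (nat k + 1))})"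
    by (auto simp: mem_region)
qed (rule finite_SigmaI; simp)

text \<open>Left of column length l1 the region of l1 @ l2 above m1 @ m2 is that of l1 above m1;
  right of it, it is the region of l2 above m2, translated by length l1, because l1 ends on
  the diagonal and m1 ends at height 2i.\<close>

lemma region_left_part:
  assumes "length m1 = length l1"
  shows "left_part (int (length l1)) (region (l1 @ l2) (m1 @ m2) a) = region l1 m1 a"
proof (rule set_eqI, clarify)
  fix k v
  show "(k, v) \<in> left_part (int (length l1)) (region (l1 @ l2) (m1 @ m2) a) \<longleftrightarrow> (k, v) \<in> region l1 m1 a"
  proof (cases "0 \<le> k \<and> k < int (length l1)")
    case True
    then have "nat k + 1 \<le> length l1" "nat k \<le> length l1" by auto
    then show ?thesis unfolding mem_restrict_cols mem_region using True assms by (simp add: vh_append_le)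
  qed (auto simp: mem_region)
qed

lemma region_right_part:
  assumes d1: "dyck l1" and len: "length m1 = length l1"
    and hi: "vh (2 * int a) m1 (length l1) = 2 * int i"
  shows "right_part (int (length l1)) (region (l1 @ l2) (m1 @ m2) a)
       = translate (int (length l1)) (region l2 m2 i)"
proof (rule set_eqI, clarify)
  fix k v
  let ?L = "int (length l1)"
  show "(k, v) \<in> right_part ?L (region (l1 @ l2) (m1 @ m2) a) \<longleftrightarrow>
        (k, v) \<in> translate ?L (region l2 m2 i)"
  proof (cases "?L \<le> k")
    case True
    define j where "j = nat (k - ?L)"
    have e: "nat k = length l1 + j" "nat k + 1 = length l1 + Suc j" "nat (k - ?L) = j"
      using True unfolding j_def by auto
    have l: "vh 0 (l1 @ l2) (length l1 + x) = vh 0 l2 x" for x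
      using vh_append_ge[of 0 l1 l2 x] dyck_end[OF d1] by simp
    have m: "vh (2 * int a) (m1 @ m2) (length l1 + x) = vh (2 * int i) m2 x" for x
      using vh_append_ge[of "2 * int a" m1 m2 x] hi len by simp
    show ?thesis
      unfolding mem_restrict_cols mem_translate mem_region e l m using True l[of "Suc j"] m[of "Suc j"] by auto
  qed (auto simp: mem_region)
qed

text \<open>Around the column length l1, where l1 @ l2 touches the diagonal, this region is
  positive and downward closed, so it can be cut there.\<close>

lemma column_cut_region:
  assumes d1: "dyck l1" and d2: "dyck l2"
  shows "column_cut (int (length l1)) (region (l1 @ l2) mu a)"
proof
  have dl: "dyck (l1 @ l2)" using dyck_append[OF d1 d2] .
  have z: "vh 0 (l1 @ l2) (length l1) = 0" using vh_append_le[of "length l1" l1 0 l2] dyck_end[OF d1] by simp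
  show "even (int (length l1))" using dyck_even[OF d1] by simp
  show "1 \<le> v" if "(k, v) \<in> region (l1 @ l2) mu a" for k v
    using that dyck_nonneg[OF dl, of "nat k"] dyck_nonneg[OF dl, of "nat k + 1"]
    unfolding mem_region by linarith
  show "(k, v') \<in> region (l1 @ l2) mu a"
    if h: "(k, v) \<in> region (l1 @ l2) mu a" "k = int (length l1) - 1 \<or> k = int (length l1)"
      "1 \<le> v'" "v' \<le> v" for k v v'
    using h(2)
  proof
    assume k: "k = int (length l1) - 1"
    then have "0 \<le> k" using h(1) unfolding mem_region by blast
    then have "nat k + 1 = length l1" using k by arith
    then show ?thesis using h z unfolding k mem_region by auto
  next
    assume k: "k = int (length l1)"
    show ?thesis using h z unfolding k mem_region by auto
  qed
qed

lemma tiling_poly_region_append: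
  assumes d1: "dyck l1" and d2: "dyck l2"
    and len: "length m1 = length l1" and hi: "vh (2 * int a) m1 (length l1) = 2 * int i"
  shows "tiling_poly t (region (l1 @ l2) (m1 @ m2) a) = tiling_poly t (region l1 m1 a) * tiling_poly t (region l2 m2 i)"
proof -
  interpret column_cut "int (length l1)" "region (l1 @ l2) (m1 @ m2) a"
    using column_cut_region[OF d1 d2] .
  have ev: "even (int (length l1))" using dyck_even[OF d1] by simp
  show ?thesis
    unfolding tiling_poly_cut[OF finite_region] region_left_part[OF len]
      region_right_part[OF d1 len hi] tiling_poly_translate[OF ev] ..
qed

section \<open>Splitting the paths\<close>

lemma mem_Lpaths: "mu \<in> Lpaths lam a b \<longleftrightarrow> length mu = length lam
      \<and> vh (2 * int a) mu (length mu) = 2 * int b \<and> (\<forall>j \<le> length lam. vh 0 lam j \<le> vh (2 * int a) mu j)"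
  by (simp add: Lpaths_def)

lemma finite_Lpaths: "finite (Lpaths lam a b)"
proof (rule finite_subset)
  show "Lpaths lam a b \<subseteq> {xs. set xs \<subseteq> UNIV \<and> length xs = length lam}" by (auto simp: mem_Lpaths)
qed (rule finite_lists_length_eq; simp)

lemma Lpaths_end_bound: "mu \<in> Lpaths lam a i \<Longrightarrow> i \<le> a + length lam"
  using vh_le[of "2 * int a" mu "length mu"] by (auto simp: mem_Lpaths)

lemma Bq_support: "Bq t lam a i \<noteq> 0 \<Longrightarrow> i \<le> a + length lam"
proof -
  assume "Bq t lam a i \<noteq> 0"
  then obtain mu where "mu \<in> Lpaths lam a i" unfolding Bq_def by fastforce
  then show ?thesis by (rule Lpaths_end_bound)
qed

context
  fixes l1 l2 :: "bool list" and a b :: nat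
  assumes d1: "dyck l1"
begin

lemma Lpaths_append:
  assumes m1: "m1 \<in> Lpaths l1 a i" and m2: "m2 \<in> Lpaths l2 i b"
  shows "m1 @ m2 \<in> Lpaths (l1 @ l2) a b"
proof -
  have l: "length m1 = length l1" "vh (2 * int a) m1 (length l1) = 2 * int i"
    "\<forall>j \<le> length l1. vh 0 l1 j \<le> vh (2 * int a) m1 j"
    using m1 by (auto simp: mem_Lpaths)
  have r: "length m2 = length l2" "vh (2 * int i) m2 (length l2) = 2 * int b"
    "\<forall>j \<le> length l2. vh 0 l2 j \<le> vh (2 * int i) m2 j"
    using m2 by (auto simp: mem_Lpaths)
  have above: "vh 0 (l1 @ l2) j \<le> vh (2 * int a) (m1 @ m2) j" if j: "j \<le> length (l1 @ l2)" for j
  proof (cases "j \<le> length l1")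
    case True
    then show ?thesis using l vh_append_le[of j l1 0 l2] vh_append_le[of j m1 "2 * int a" m2] by simp
  next
    case False
    define j' where "j' = j - length l1"
    have j': "j = length l1 + j'" "j' \<le> length l2" using j False unfolding j'_def by auto
    then show ?thesis
      using l r dyck_end[OF d1] vh_append_ge[of 0 l1 l2 j'] vh_append_ge[of "2 * int a" m1 m2 j'] by simp
  qed
  have "vh (2 * int a) (m1 @ m2) (length (m1 @ m2)) = 2 * int b"
    using vh_append_ge[of "2 * int a" m1 m2 "length m2"] l r by simp
  then show ?thesis unfolding mem_Lpaths using l(1) r(1) above by simp
qed

text \<open>\<dots> and every path of L(l1 @ l2; a, b) arises this way, with 2i its (even, nonnegative)
  height at the column where l1 ends.\<close>

definition mid_index :: "bool list \<Rightarrow> nat" where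
  "mid_index mu = nat (vh (2 * int a) mu (length l1) div 2)"

lemma Lpaths_split:
  assumes mu: "mu \<in> Lpaths (l1 @ l2) a b"
  shows "take (length l1) mu \<in> Lpaths l1 a (mid_index mu)"
    and "drop (length l1) mu \<in> Lpaths l2 (mid_index mu) b"
proof -
  let ?L = "length l1" and ?i = "mid_index mu"
  have len: "length mu = ?L + length l2" and en: "vh (2 * int a) mu (length mu) = 2 * int b"
    and above: "\<forall>j \<le> ?L + length l2. vh 0 (l1 @ l2) j \<le> vh (2 * int a) mu j"
    using mu by (auto simp: mem_Lpaths)
  have z: "vh 0 (l1 @ l2) ?L = 0" using vh_append_le[of ?L l1 0 l2] dyck_end[OF d1] by simp
  then have "0 \<le> vh (2 * int a) mu ?L" using above by (metis le_add1)
  moreover have "even (vh (2 * int a) mu ?L - 2 * int a - int ?L)" by (rule vh_parity) (use len in simp)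
  then have "even (vh (2 * int a) mu ?L)" using dyck_even[OF d1] by presburger
  ultimately have mid: "vh (2 * int a) mu ?L = 2 * int ?i" unfolding mid_index_def by auto
  have "vh 0 l1 j \<le> vh (2 * int a) (take ?L mu) j" if "j \<le> ?L" for j
    using above[rule_format, of j] that vh_append_le[of j l1 0 l2] vh_take[OF that, of "2 * int a" mu] by simp
  then show "take ?L mu \<in> Lpaths l1 a ?i" unfolding mem_Lpaths using len mid by (simp add: vh_take)
  have dr: "vh (2 * int ?i) (drop ?L mu) j = vh (2 * int a) mu (?L + j)" for j
    using vh_drop[of ?L mu "2 * int a" j] len mid by simp
  have "vh 0 l2 j \<le> vh (2 * int ?i) (drop ?L mu) j" if "j \<le> length l2" for j
    using above[rule_format, of "?L + j"] that vh_append_ge[of 0 l1 l2 j] dyck_end[OF d1] dr by simp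
  then show "drop ?L mu \<in> Lpaths l2 ?i b" unfolding mem_Lpaths using dr en len by simp
qed

lemma Lpaths_append_bij:
  "bij_betw (\<lambda>(i, m1, m2). m1 @ m2) (SIGMA i:{..a + length l1}. Lpaths l1 a i \<times> Lpaths l2 i b)
     (Lpaths (l1 @ l2) a b)"
proof (rule bij_betw_byWitness[where f' = "\<lambda>mu. (mid_index mu, take (length l1) mu, drop (length l1) mu)"])
  show "\<forall>x\<in>SIGMA i:{..a + length l1}. Lpaths l1 a i \<times> Lpaths l2 i b.
      (\<lambda>mu. (mid_index mu, take (length l1) mu, drop (length l1) mu)) ((\<lambda>(i, m1, m2). m1 @ m2) x) = x"
  proof
    fix x assume "x \<in> (SIGMA i:{..a + length l1}. Lpaths l1 a i \<times> Lpaths l2 i b)"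
    then obtain i m1 m2 where x: "x = (i, m1, m2)" and "m1 \<in> Lpaths l1 a i" by auto
    then have "length m1 = length l1" "vh (2 * int a) m1 (length l1) = 2 * int i"
      by (auto simp: mem_Lpaths)
    then show "(\<lambda>mu. (mid_index mu, take (length l1) mu, drop (length l1) mu)) ((\<lambda>(i, m1, m2). m1 @ m2) x) = x"
      unfolding mid_index_def x using vh_append_le[of "length l1" m1 "2 * int a" m2] by simp
  qed
  show "(\<lambda>(i, m1, m2). m1 @ m2) ` (SIGMA i:{..a + length l1}. Lpaths l1 a i \<times> Lpaths l2 i b)
      \<subseteq> Lpaths (l1 @ l2) a b"
    using Lpaths_append by auto
  show "(\<lambda>mu. (mid_index mu, take (length l1) mu, drop (length l1) mu)) ` Lpaths (l1 @ l2) a b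
      \<subseteq> (SIGMA i:{..a + length l1}. Lpaths l1 a i \<times> Lpaths l2 i b)"
    using Lpaths_split Lpaths_end_bound by fastforce
qed simp

end

section \<open>The concatenation formula\<close>

theorem lemma3p7:
  fixes t :: "'a::comm_semiring_1" and l1 l2 :: "bool list" and a b :: nat
  assumes "dyck l1" and "dyck l2"
  shows "Bq t (l1 @ l2) a b = Sum_any (\<lambda>i::nat. Bq t l1 a i * Bq t l2 i b)"
proof -
  let ?K = "a + length l1"
  let ?S = "SIGMA i:{..?K}. Lpaths l1 a i \<times> Lpaths l2 i b"
  let ?poly = "\<lambda>lam mu a. tiling_poly t (region lam mu a)"
  have "Bq t (l1 @ l2) a b = (\<Sum>mu\<in>Lpaths (l1 @ l2) a b. ?poly (l1 @ l2) mu a)"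
    by (rule Bq_tiling_poly)
  also have "\<dots> = (\<Sum>(i, m1, m2)\<in>?S. ?poly (l1 @ l2) (m1 @ m2) a)"
    using sum.reindex_bij_betw[OF Lpaths_append_bij[OF assms(1)], symmetric]
    by (simp add: case_prod_unfold)
  also have "\<dots> = (\<Sum>(i, m1, m2)\<in>?S. ?poly l1 m1 a * ?poly l2 m2 i)"
    using tiling_poly_region_append[OF assms] by (intro sum.cong) (auto simp: mem_Lpaths)
  also have "\<dots> = (\<Sum>i\<le>?K. Bq t l1 a i * Bq t l2 i b)"
    by (simp add: sum.Sigma[symmetric] finite_Lpaths sum.cartesian_product[symmetric]
        sum_product Bq_tiling_poly)
  also have "\<dots> = Sum_any (\<lambda>i. Bq t l1 a i * Bq t l2 i b)"
    by (rule Sum_any.expand_superset[symmetric]) (auto dest: mult_not_zero Bq_support)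
  finally show ?thesis .
qed

end
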